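(* There exist constants $A,B,\bar\delta>0$ and $\lambda<1$ such that for every $\delta\in[0,\bar\delta)$, every $n\ge0$ and every $f\in\mathcal{B}$, $$\|\mathcal{L}_\delta^nf\|_s\le A\lambda^n\|f\|_s+B\|f\|_{L^1}.$$
   Context: Let $b:\mathbb{R}^d\to\mathbb{R}^d$ satisfy (A) local Lipschitz continuity: for each $x_0\in\mathbb{R}^d$ there are $K>0$, $\delta_0>0$ with $|b(x_0)-b(x)|\le K|x_0-x|$ whenever $|x_0-x|<\delta_0$; and (B) dissipativity: there are $c_1\in\mathbb{R}$, $c_2>0$ with $\langle b(x),x\rangle\le c_1-c_2|x|^2$ for all $x\in\mathbb{R}^d$. Let $X^x_t$ be the solution of $dX_t^x=b(X_t^x)\,dt+dW_t$, $X_0^x=x$, with $W$ a standard Brownian motion in $\mathbb{R}^d$, and let $\theta_t$ be the flow of $\dot\theta=b(\theta)$. It is known that the law of $X_1^x$ has a density $\kappa(x,y)$ (in $y$, w.r.t. Lebesgue measure), continuous in $(x,y)$, and that there are constants $\lambda_0,\lambda_1\in(0,1]$, $C_0,C_1\ge 1$ such that for all $x,y$: $C_0^{-1}e^{-|\theta_1(x)-y|^2/\lambda_0}\le\kappa(x,y)\le C_0e^{-\lambda_0|\theta_1(x)-y|^2}$ and $|\nabla_x\kappa(x,y)|,|\nabla_y\kappa(x,y)|\le C_1e^{-\lambda_1|\theta_1(x)-y|^2}$. The transfer operator $\mathcal{L}=\mathcal{L}_0:L^1(\mathbb{R}^d)\to L^1(\mathbb{R}^d)$ is $\mathcal{L}f(y)=\int_{\mathbb{R}^d}\kappa(x,y)f(x)\,dx$.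 Spaces: for $\alpha\ge0$ let $\rho_\alpha(x)=(1+|x|^2)^{\alpha/2}$ and let $L^1_\alpha$ be the space of measurable $f:\mathbb{R}^d\to\mathbb{R}$ with $\|f\|_{L^1_\alpha}=\int\rho_\alpha(x)|f(x)|\,dx<\infty$. Fix a compact set $D\subset\mathbb{R}^d$ (a compact neighbourhood of $0$). The strong norm is $\|f\|_s=\|f\|_{L^1_2}+\|1_Df\|_{L^2}$ and the strong space is $\mathcal{B}=\{f\in L^1_2:\|f\|_s<\infty\}$. Set $V_{\mathcal{B}}=\{f\in\mathcal{B}:\int f\,dx=0\}$ and $V_{L^1}=\{f\in L^1:\int f\,dx=0\}$. Perturbations: fix $\bar\delta>0$. For $\delta\in[0,\bar\delta)$ let $\kappa_\delta=\kappa+\delta\dot\kappa+r_\delta$, where $\dot\kappa,r_\delta\in L^2(D\times D)$ (extended by zero outside $D\times D$), $r_0=0$, and $\|r_\delta\|_{L^2}=o(\delta)$ as $\delta\to0$. Define $\mathcal{L}_\delta f(y)=\int\kappa_\delta(x,y)f(x)\,dx$ and $\dot{\mathcal{L}}f(y)=\int\dot\kappa(x,y)f(x)\,dx$. Standing assumption: every $\mathcal{L}_\delta$, $\delta\in[0,\bar\delta)$, is integral preserving, i.e. $\int\mathcal{L}_\delta g\,dy=\int g\,dx$ for all $g\in L^1$. *)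

theory Defs
  imports "HOL-Probability.Probability"
begin

definition rho :: "real \<Rightarrow> 'a::euclidean_space \<Rightarrow> real" where
  "rho \<alpha> x = (1 + (norm x)\<^sup>2) powr (\<alpha> / 2)"

definition in_B :: "'a::euclidean_space set \<Rightarrow> ('a \<Rightarrow> real) \<Rightarrow> bool" where
  "in_B D f \<longleftrightarrow> f \<in> borel_measurable lborel
     \<and> integrable lborel (\<lambda>x. rho 2 x * f x)
     \<and> integrable lborel (\<lambda>x. (indicator D x * f x)\<^sup>2)"

definition L1_norm :: "('a::euclidean_space \<Rightarrow> real) \<Rightarrow> real" where
  "L1_norm f = (\<integral>x. \<bar>f x\<bar> \<partial>lborel)"

definition L1w_norm :: "real \<Rightarrow> ('a::euclidean_space \<Rightarrow> real) \<Rightarrow> real" where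
  "L1w_norm \<alpha> f = (\<integral>x. rho \<alpha> x * \<bar>f x\<bar> \<partial>lborel)"

definition L2_norm :: "('a::euclidean_space \<Rightarrow> real) \<Rightarrow> real" where
  "L2_norm f = sqrt (\<integral>x. (f x)\<^sup>2 \<partial>lborel)"

definition s_norm :: "'a::euclidean_space set \<Rightarrow> ('a \<Rightarrow> real) \<Rightarrow> real" where
  "s_norm D f = L1w_norm 2 f + L2_norm (\<lambda>x. indicator D x * f x)"

definition kernel_L2_norm :: "('a::euclidean_space \<Rightarrow> 'a \<Rightarrow> real) \<Rightarrow> real" where
  "kernel_L2_norm k = sqrt (\<integral>z. (k (fst z) (snd z))\<^sup>2 \<partial>(lborel \<Otimes>\<^sub>M lborel))"

definition transfer_op :: "('a::euclidean_space \<Rightarrow> 'a \<Rightarrow> real) \<Rightarrow> ('a \<Rightarrow> real) \<Rightarrow> 'a \<Rightarrow> real" where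
  "transfer_op k f y = (\<integral>x. k x y * f x \<partial>lborel)"

definition gauss_dens :: "real \<Rightarrow> 'a::euclidean_space \<Rightarrow> real" where
  "gauss_dens t x = (2 * pi * t) powr (- real DIM('a) / 2) * exp (- (norm x)\<^sup>2 / (2 * t))"

definition std_BM :: "'p measure \<Rightarrow> (real \<Rightarrow> 'p \<Rightarrow> 'a::euclidean_space) \<Rightarrow> bool" where
  "std_BM M W \<longleftrightarrow> prob_space M
     \<and> (\<forall>t\<ge>0. W t \<in> borel_measurable M)
     \<and> (\<forall>\<omega>\<in>space M. W 0 \<omega> = 0 \<and> continuous_on {0..} (\<lambda>t. W t \<omega>))
     \<and> (\<forall>s t. 0 \<le> s \<and> s < t \<longrightarrow>
           distributed M lborel (\<lambda>\<omega>. W t \<omega> - W s \<omega>) (\<lambda>x. ennreal (gauss_dens (t - s) x)))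
     \<and> (\<forall>(ts::nat \<Rightarrow> real) n. 0 \<le> ts 0 \<and> (\<forall>i<n. ts i \<le> ts (Suc i)) \<longrightarrow>
           prob_space.indep_vars M (\<lambda>_. borel) (\<lambda>i \<omega>. W (ts (Suc i)) \<omega> - W (ts i) \<omega>) {..<n})"

definition solves_SDE :: "'p measure \<Rightarrow> ('a::euclidean_space \<Rightarrow> 'a) \<Rightarrow> (real \<Rightarrow> 'p \<Rightarrow> 'a)
     \<Rightarrow> 'a \<Rightarrow> (real \<Rightarrow> 'p \<Rightarrow> 'a) \<Rightarrow> bool" where
  "solves_SDE M b W x X \<longleftrightarrow>
     (\<forall>\<omega>\<in>space M. continuous_on {0..} (\<lambda>t. X t \<omega>)
        \<and> (\<forall>t\<ge>0. X t \<omega> = x + integral {0..t} (\<lambda>s. b (X s \<omega>)) + W t \<omega>))"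

definition is_flow :: "('a::euclidean_space \<Rightarrow> 'a) \<Rightarrow> (real \<Rightarrow> 'a \<Rightarrow> 'a) \<Rightarrow> bool" where
  "is_flow b \<theta> \<longleftrightarrow> (\<forall>x. \<theta> 0 x = x \<and>
     (\<forall>t\<ge>0. ((\<lambda>s. \<theta> s x) has_vector_derivative b (\<theta> t x)) (at t within {0..})))"

end

theory Submission
  imports Defs
begin

text \<open>
  The unperturbed kernel is a Markov kernel which, for the Lyapunov function \<open>lyap x = 1 + |x|\<^sup>2\<close>,
  satisfies a drift condition (the flow of a dissipative field contracts \<open>|x|\<^sup>2\<close>, and the
  kernel is Gaussian around \<open>\<theta>\<^sub>1 x\<close>) and a Doeblin minorization on every sublevel set of \<open>lyap\<close>
  (Gaussian lower bound). Doeblin's argument then contracts the \<open>L\<^sup>1\<close> norm of zero-mean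
  densities up to a multiple of the weighted norm, the drift contracts the weighted norm up to a
  multiple of the \<open>L\<^sup>1\<close> norm, and boundedness of the kernel controls the \<open>L\<^sup>2(D)\<close> part by
  the \<open>L\<^sup>1\<close> norm. A perturbation supported in \<open>D \<times> D\<close> with Hilbert--Schmidt norm \<open>\<epsilon>\<close> moves
  each of the three norms by \<open>O(\<epsilon>) \<parallel>1\<^sub>D f\<parallel>\<^sub>2\<close>. Hence a suitably weighted sum of the three norms
  is contracted by a fixed \<open>\<alpha> < 1\<close> on zero-mean densities, uniformly in small \<open>\<delta>\<close>. Writing
  \<open>f = g + (\<integral> f) \<phi>\<close> with \<open>\<phi>\<close> the normalized indicator of \<open>D\<close>, whose orbit stays bounded, yields the
  Lasota--Yorke inequality.
\<close>

section \<open>Transfer operators with measurable kernels\<close>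

definition kernel_measurable :: "('a::euclidean_space \<Rightarrow> 'a \<Rightarrow> real) \<Rightarrow> bool" where
  "kernel_measurable k \<longleftrightarrow> (\<lambda>z. k (fst z) (snd z)) \<in> borel_measurable (lborel \<Otimes>\<^sub>M lborel)"

lemma kernel_measurable_swap:
  assumes "kernel_measurable k"
  shows "(\<lambda>z. k (snd z) (fst z)) \<in> borel_measurable (lborel \<Otimes>\<^sub>M lborel)"
proof -
  have "(\<lambda>z. (snd z, fst z)) \<in> (lborel \<Otimes>\<^sub>M lborel) \<rightarrow>\<^sub>M (lborel \<Otimes>\<^sub>M (lborel::'a measure))"
    by measurable
  from measurable_compose[OF this assms[unfolded kernel_measurable_def]] show ?thesis by simp
qed

lemma kernel_measurable_swap_borel:
  assumes "kernel_measurable k"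
  shows "(\<lambda>z. k (snd z) (fst z)) \<in> borel_measurable (borel \<Otimes>\<^sub>M borel)"
  using kernel_measurable_swap[OF assms]
  by (simp add: measurable_lborel2[symmetric] sets_pair_measure_cong)

lemma kernel_measurable_column:
  assumes "kernel_measurable k" shows "(\<lambda>x. k x y) \<in> borel_measurable borel"
proof -
  have "(\<lambda>x. (x, y)) \<in> borel \<rightarrow>\<^sub>M (lborel \<Otimes>\<^sub>M (lborel::'a measure))" by measurable
  from measurable_compose[OF this assms[unfolded kernel_measurable_def]] show ?thesis by simp
qed

lemma kernel_measurable_row:
  assumes "kernel_measurable k" shows "(\<lambda>y. k x y) \<in> borel_measurable borel"
proof -
  have "(\<lambda>y. (x, y)) \<in> borel \<rightarrow>\<^sub>M (lborel \<Otimes>\<^sub>M (lborel::'a measure))" by measurable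
  from measurable_compose[OF this assms[unfolded kernel_measurable_def]] show ?thesis by simp
qed

lemma kernel_measurable_add:
  "kernel_measurable k1 \<Longrightarrow> kernel_measurable k2 \<Longrightarrow> kernel_measurable (\<lambda>x y. k1 x y + k2 x y)"
  unfolding kernel_measurable_def by (rule borel_measurable_add)

lemma kernel_measurable_continuous:
  assumes "continuous_on UNIV (\<lambda>z. k (fst z) (snd z))"
  shows "kernel_measurable k"
proof -
  have "(\<lambda>z. k (fst z) (snd z)) \<in> borel_measurable (borel \<Otimes>\<^sub>M borel)"
    using borel_measurable_continuous_onI[OF assms] by (simp add: borel_prod)
  moreover have "sets (lborel \<Otimes>\<^sub>M lborel) = sets (borel \<Otimes>\<^sub>M (borel :: 'a measure))"
    by (rule sets_pair_measure_cong) auto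
  moreover have "borel_measurable (lborel \<Otimes>\<^sub>M lborel) = borel_measurable (borel \<Otimes>\<^sub>M (borel :: 'a measure))"
    by (rule measurable_cong_sets) (use calculation in auto)
  ultimately show ?thesis unfolding kernel_measurable_def by simp
qed

lemma transfer_op_measurable:
  assumes "kernel_measurable k" and [measurable]: "u \<in> borel_measurable lborel"
  shows "transfer_op k u \<in> borel_measurable lborel"
proof -
  have [measurable]: "(\<lambda>z. k (snd z) (fst z)) \<in> borel_measurable (lborel \<Otimes>\<^sub>M lborel)"
    using kernel_measurable_swap[OF assms(1)] .
  have "case_prod (\<lambda>y x. k x y * u x) \<in> borel_measurable (lborel \<Otimes>\<^sub>M lborel)"
    unfolding case_prod_beta' by measurable
  then show ?thesis unfolding transfer_op_def[abs_def]
    by (rule lborel.borel_measurable_lebesgue_integral)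
qed

lemma abs_transfer_op_le:
  "ennreal \<bar>transfer_op k u y\<bar> \<le> (\<integral>\<^sup>+x. ennreal \<bar>k x y * u x\<bar> \<partial>lborel)"
proof (cases "integrable lborel (\<lambda>x. k x y * u x)")
  case True
  then show ?thesis unfolding transfer_op_def using integral_norm_bound_ennreal[OF True] by simp
next
  case False
  then show ?thesis unfolding transfer_op_def by (simp add: not_integrable_integral_eq)
qed

lemma nn_integral_weighted_transfer_op_le:
  assumes k: "kernel_measurable k" and [measurable]: "u \<in> borel_measurable lborel" "w \<in> borel_measurable lborel"
    and w: "\<And>y. w y \<ge> 0"
  shows "(\<integral>\<^sup>+y. ennreal (w y * \<bar>transfer_op k u y\<bar>) \<partial>lborel)
     \<le> (\<integral>\<^sup>+x. ennreal \<bar>u x\<bar> * (\<integral>\<^sup>+y. ennreal (w y * \<bar>k x y\<bar>) \<partial>lborel) \<partial>lborel)"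
proof -
  have [measurable]: "(\<lambda>z. k (fst z) (snd z)) \<in> borel_measurable (lborel \<Otimes>\<^sub>M lborel)"
    using k unfolding kernel_measurable_def .
  have [measurable]: "\<And>y. (\<lambda>x. k x y) \<in> borel_measurable borel" "\<And>x. (\<lambda>y. k x y) \<in> borel_measurable borel"
    using kernel_measurable_column[OF k] kernel_measurable_row[OF k] by auto
  have "(\<integral>\<^sup>+y. ennreal (w y * \<bar>transfer_op k u y\<bar>) \<partial>lborel)
     \<le> (\<integral>\<^sup>+y. ennreal (w y) * (\<integral>\<^sup>+x. ennreal \<bar>k x y * u x\<bar> \<partial>lborel) \<partial>lborel)"
    using w by (intro nn_integral_mono) (auto simp: ennreal_mult intro!: mult_left_mono abs_transfer_op_le)
  also have "\<dots> = (\<integral>\<^sup>+y. (\<integral>\<^sup>+x. ennreal (w y * \<bar>k x y\<bar> * \<bar>u x\<bar>) \<partial>lborel) \<partial>lborel)"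
    using w by (subst nn_integral_cmult[symmetric]) (auto simp: ennreal_mult[symmetric] abs_mult mult.assoc)
  also have "\<dots> = (\<integral>\<^sup>+x. (\<integral>\<^sup>+y. ennreal (w y * \<bar>k x y\<bar> * \<bar>u x\<bar>) \<partial>lborel) \<partial>lborel)"
    by (rule lborel_pair.Fubini') measurable
  also have "\<dots> = (\<integral>\<^sup>+x. ennreal \<bar>u x\<bar> * (\<integral>\<^sup>+y. ennreal (w y * \<bar>k x y\<bar>) \<partial>lborel) \<partial>lborel)"
    using w by (intro nn_integral_cong, subst nn_integral_cmult[symmetric])
      (auto simp: ennreal_mult[symmetric] mult.commute mult.left_commute intro!: nn_integral_cong)
  finally show ?thesis .
qed

text \<open>Hilbert--Schmidt bound: a kernel vanishing for \<open>x \<notin> D\<close> only sees \<open>1\<^sub>D u\<close>.\<close>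

lemma nn_integral_transfer_op_square_le:
  assumes k: "kernel_measurable k" and [measurable]: "u \<in> borel_measurable lborel" "D \<in> sets borel"
    and supp: "\<And>x y. x \<notin> D \<Longrightarrow> k x y = 0"
  shows "(\<integral>\<^sup>+y. (\<integral>\<^sup>+x. ennreal \<bar>k x y * u x\<bar> \<partial>lborel)\<^sup>2 \<partial>lborel)
     \<le> (\<integral>\<^sup>+z. ennreal ((k (fst z) (snd z))\<^sup>2) \<partial>(lborel \<Otimes>\<^sub>M lborel))
        * (\<integral>\<^sup>+x. ennreal ((indicator D x * u x)\<^sup>2) \<partial>lborel)"
proof -
  have [measurable]: "(\<lambda>z. k (fst z) (snd z)) \<in> borel_measurable (lborel \<Otimes>\<^sub>M lborel)"
    using k unfolding kernel_measurable_def .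
  have [measurable]: "\<And>y. (\<lambda>x. k x y) \<in> borel_measurable borel" "\<And>x. (\<lambda>y. k x y) \<in> borel_measurable borel"
    using kernel_measurable_column[OF k] kernel_measurable_row[OF k] by auto
  have [measurable]: "(\<lambda>z. k (snd z) (fst z)) \<in> borel_measurable (borel \<Otimes>\<^sub>M borel)"
    using kernel_measurable_swap_borel[OF k] .
  let ?Q = "(\<integral>\<^sup>+x. ennreal ((indicator D x * u x)\<^sup>2) \<partial>lborel)"
  have pointwise: "(\<integral>\<^sup>+x. ennreal \<bar>k x y * u x\<bar> \<partial>lborel)\<^sup>2 \<le> (\<integral>\<^sup>+x. ennreal ((k x y)\<^sup>2) \<partial>lborel) * ?Q" for y
  proof -
    have "(\<integral>\<^sup>+x. ennreal \<bar>k x y * u x\<bar> \<partial>lborel)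
        = (\<integral>\<^sup>+x. ennreal \<bar>k x y\<bar> * ennreal \<bar>indicator D x * u x\<bar> \<partial>lborel)"
      by (intro nn_integral_cong) (auto simp: supp ennreal_mult[symmetric] abs_mult indicator_def)
    also have "(\<dots>)\<^sup>2 \<le> (\<integral>\<^sup>+x. (ennreal \<bar>k x y\<bar>)^2 \<partial>lborel) * (\<integral>\<^sup>+x. (ennreal \<bar>indicator D x * u x\<bar>)^2 \<partial>lborel)"
      by (rule Cauchy_Schwarz_nn_integral) auto
    also have "\<dots> = (\<integral>\<^sup>+x. ennreal ((k x y)\<^sup>2) \<partial>lborel) * ?Q"
      by (simp add: ennreal_power)
    finally show ?thesis .
  qed
  have "(\<integral>\<^sup>+y. (\<integral>\<^sup>+x. ennreal \<bar>k x y * u x\<bar> \<partial>lborel)\<^sup>2 \<partial>lborel)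
      \<le> (\<integral>\<^sup>+y. (\<integral>\<^sup>+x. ennreal ((k x y)\<^sup>2) \<partial>lborel) * ?Q \<partial>lborel)"
    by (intro nn_integral_mono pointwise)
  also have "\<dots> = (\<integral>\<^sup>+y. (\<integral>\<^sup>+x. ennreal ((k x y)\<^sup>2) \<partial>lborel) \<partial>lborel) * ?Q"
    by (rule nn_integral_multc) measurable
  also have "(\<integral>\<^sup>+y. (\<integral>\<^sup>+x. ennreal ((k x y)\<^sup>2) \<partial>lborel) \<partial>lborel)
     = (\<integral>\<^sup>+x. (\<integral>\<^sup>+y. ennreal ((k x y)\<^sup>2) \<partial>lborel) \<partial>lborel)"
    by (rule lborel_pair.Fubini') measurable
  also have "\<dots> = (\<integral>\<^sup>+z. ennreal ((k (fst z) (snd z))\<^sup>2) \<partial>(lborel \<Otimes>\<^sub>M lborel))"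
    by (subst lborel.nn_integral_fst[symmetric]) auto
  finally show ?thesis .
qed

lemma Cauchy_Schwarz_integral:
  fixes a b :: "'b \<Rightarrow> real"
  assumes [measurable]: "a \<in> borel_measurable M" "b \<in> borel_measurable M"
    and ia: "integrable M (\<lambda>x. (a x)\<^sup>2)" and ib: "integrable M (\<lambda>x. (b x)\<^sup>2)"
  shows "integrable M (\<lambda>x. a x * b x)"
    and "(\<integral>x. \<bar>a x * b x\<bar> \<partial>M)\<^sup>2 \<le> (\<integral>x. (a x)\<^sup>2 \<partial>M) * (\<integral>x. (b x)\<^sup>2 \<partial>M)"
proof -
  have le: "\<bar>a x * b x\<bar> \<le> (a x)\<^sup>2 + (b x)\<^sup>2" for x
  proof -
    have "0 \<le> (\<bar>a x\<bar> - \<bar>b x\<bar>)\<^sup>2" by simp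
    then have "2*\<bar>a x\<bar>*\<bar>b x\<bar> \<le> \<bar>a x\<bar>\<^sup>2 + \<bar>b x\<bar>\<^sup>2" by (simp add: power2_diff)
    moreover have "0 \<le> \<bar>a x\<bar>*\<bar>b x\<bar>" by simp
    ultimately show ?thesis unfolding abs_mult power2_abs by linarith
  qed
  show int: "integrable M (\<lambda>x. a x * b x)"
    by (rule Bochner_Integration.integrable_bound[OF Bochner_Integration.integrable_add[OF ia ib]]) (auto intro!: AE_I2 le)
  have "ennreal ((\<integral>x. \<bar>a x * b x\<bar> \<partial>M)\<^sup>2) = (ennreal (\<integral>x. \<bar>a x * b x\<bar> \<partial>M))\<^sup>2"
    by (simp add: ennreal_power)
  also have "ennreal (\<integral>x. \<bar>a x * b x\<bar> \<partial>M) = (\<integral>\<^sup>+x. ennreal \<bar>a x\<bar> * ennreal \<bar>b x\<bar> \<partial>M)"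
  proof -
    have "ennreal (\<integral>x. \<bar>a x * b x\<bar> \<partial>M) = (\<integral>\<^sup>+x. ennreal \<bar>a x * b x\<bar> \<partial>M)"
      using integrable_abs[OF int] by (subst nn_integral_eq_integral) auto
    also have "\<dots> = (\<integral>\<^sup>+x. ennreal \<bar>a x\<bar> * ennreal \<bar>b x\<bar> \<partial>M)"
      by (simp add: ennreal_mult abs_mult)
    finally show ?thesis .
  qed
  also have "(\<dots>)\<^sup>2 \<le> (\<integral>\<^sup>+x. (ennreal \<bar>a x\<bar>)^2 \<partial>M) * (\<integral>\<^sup>+x. (ennreal \<bar>b x\<bar>)^2 \<partial>M)"
    by (rule Cauchy_Schwarz_nn_integral) auto
  also have "(\<integral>\<^sup>+x. (ennreal \<bar>a x\<bar>)^2 \<partial>M) = ennreal (\<integral>x. (a x)\<^sup>2 \<partial>M)"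
    using ia by (subst nn_integral_eq_integral[symmetric]) (auto simp: ennreal_power)
  also have "(\<integral>\<^sup>+x. (ennreal \<bar>b x\<bar>)^2 \<partial>M) = ennreal (\<integral>x. (b x)\<^sup>2 \<partial>M)"
    using ib by (subst nn_integral_eq_integral[symmetric]) (auto simp: ennreal_power)
  finally show "(\<integral>x. \<bar>a x * b x\<bar> \<partial>M)\<^sup>2 \<le> (\<integral>x. (a x)\<^sup>2 \<partial>M) * (\<integral>x. (b x)\<^sup>2 \<partial>M)"
    using mult_nonneg_nonneg[OF integral_nonneg_AE[of "\<lambda>x. (a x)\<^sup>2" M] integral_nonneg_AE[of "\<lambda>x. (b x)\<^sup>2" M]]
    by (simp add: ennreal_mult'[symmetric] ennreal_le_iff2) (auto)
qed

lemma Minkowski_integral_square: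
  fixes a b :: "'b \<Rightarrow> real"
  assumes [measurable]: "a \<in> borel_measurable M" "b \<in> borel_measurable M"
    and ia: "integrable M (\<lambda>x. (a x)\<^sup>2)" and ib: "integrable M (\<lambda>x. (b x)\<^sup>2)"
  shows "integrable M (\<lambda>x. (a x + b x)\<^sup>2)"
    and "sqrt (\<integral>x. (a x + b x)\<^sup>2 \<partial>M) \<le> sqrt (\<integral>x. (a x)\<^sup>2 \<partial>M) + sqrt (\<integral>x. (b x)\<^sup>2 \<partial>M)"
proof -
  note cs = Cauchy_Schwarz_integral[OF assms]
  have iab: "integrable M (\<lambda>x. \<bar>a x * b x\<bar>)" using cs(1) by auto
  have eq: "(a x + b x)\<^sup>2 = (a x)\<^sup>2 + 2 * (a x * b x) + (b x)\<^sup>2" for x by (simp add: power2_eq_square algebra_simps)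
  show int: "integrable M (\<lambda>x. (a x + b x)\<^sup>2)"
    unfolding eq using ia ib cs(1) by auto
  let ?A = "\<integral>x. (a x)\<^sup>2 \<partial>M" and ?B = "\<integral>x. (b x)\<^sup>2 \<partial>M"
  have A0: "?A \<ge> 0" "?B \<ge> 0" by auto
  have "(\<integral>x. (a x + b x)\<^sup>2 \<partial>M) \<le> (\<integral>x. (a x)\<^sup>2 + 2 * \<bar>a x * b x\<bar> + (b x)\<^sup>2 \<partial>M)"
    using int ia ib iab by (intro integral_mono) (auto simp: eq)
  also have "\<dots> = ?A + 2 * (\<integral>x. \<bar>a x * b x\<bar> \<partial>M) + ?B"
    using ia ib iab by simp
  also have "(\<integral>x. \<bar>a x * b x\<bar> \<partial>M) \<le> sqrt ?A * sqrt ?B"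
  proof -
    have "(\<integral>x. \<bar>a x * b x\<bar> \<partial>M) \<le> sqrt ((\<integral>x. \<bar>a x * b x\<bar> \<partial>M)\<^sup>2)" by simp
    also have "\<dots> \<le> sqrt (?A * ?B)" using cs(2) by (rule real_sqrt_le_mono)
    finally show ?thesis by (simp add: real_sqrt_mult)
  qed
  finally have "(\<integral>x. (a x + b x)\<^sup>2 \<partial>M) \<le> (sqrt ?A + sqrt ?B)\<^sup>2"
    using A0 by (simp add: power2_eq_square algebra_simps)
  then have "sqrt (\<integral>x. (a x + b x)\<^sup>2 \<partial>M) \<le> sqrt ((sqrt ?A + sqrt ?B)\<^sup>2)" by (rule real_sqrt_le_mono)
  then show "sqrt (\<integral>x. (a x + b x)\<^sup>2 \<partial>M) \<le> sqrt ?A + sqrt ?B" using A0 by simp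
qed

section \<open>The weight and the strong space\<close>

definition lyap :: "'a::euclidean_space \<Rightarrow> real" where "lyap x = 1 + (norm x)\<^sup>2"

lemma lyap_ge_1: "1 \<le> lyap x" by (simp add: lyap_def)

lemma lyap_pos: "0 < lyap x" using lyap_ge_1[of x] by linarith

lemma lyap_abs_mult: "\<bar>c\<bar> \<le> lyap x * \<bar>c\<bar>" "0 \<le> lyap x * \<bar>c\<bar>" "\<bar>lyap x * \<bar>c\<bar>\<bar> = lyap x * \<bar>c\<bar>"
  using mult_right_mono[OF lyap_ge_1[of x], of "\<bar>c\<bar>"] lyap_pos[of x] by auto

lemma rho_2_eq_lyap: "rho 2 x = lyap x"
  using lyap_pos[of x] by (simp add: rho_def lyap_def)

lemma lyap_measurable[measurable]: "lyap \<in> borel_measurable borel"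
  unfolding lyap_def[abs_def] by measurable

lemma lyap_bounded_on_compact:
  assumes "compact D" obtains VD where "1 \<le> VD" "\<And>y. y \<in> D \<Longrightarrow> lyap y \<le> VD"
proof -
  obtain B where "\<And>y. y \<in> D \<Longrightarrow> norm y \<le> B"
    using compact_imp_bounded[OF assms] bounded_iff by blast
  then have "\<And>y. y \<in> D \<Longrightarrow> lyap y \<le> 1 + (max B 0)\<^sup>2"
    unfolding lyap_def by (smt (verit) norm_ge_zero power_mono)
  then show ?thesis using that[of "1 + (max B 0)\<^sup>2"] by simp
qed

abbreviation L2_norm_on :: "'a::euclidean_space set \<Rightarrow> ('a \<Rightarrow> real) \<Rightarrow> real" where
  "L2_norm_on D u \<equiv> L2_norm (\<lambda>x. indicator D x * u x)"

lemma L1_norm_nonneg: "0 \<le> L1_norm u"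
  by (simp add: L1_norm_def)

lemma L1w_norm_nonneg: "0 \<le> L1w_norm 2 u"
  unfolding L1w_norm_def by (intro integral_nonneg_AE AE_I2) (simp add: rho_def)

lemma L2_norm_nonneg: "0 \<le> L2_norm u"
  by (simp add: L2_norm_def)

lemma s_norm_nonneg: "0 \<le> s_norm D u"
  by (simp add: s_norm_def L1w_norm_nonneg L2_norm_nonneg)

lemma L1w_norm_2_eq: "L1w_norm 2 u = (\<integral>x. lyap x * \<bar>u x\<bar> \<partial>lborel)"
  by (simp add: L1w_norm_def rho_2_eq_lyap)

lemma in_B_measurable: "in_B D u \<Longrightarrow> u \<in> borel_measurable borel"
  by (simp add: in_B_def)

lemma in_B_integrable_lyap: "in_B D u \<Longrightarrow> integrable lborel (\<lambda>x. lyap x * \<bar>u x\<bar>)"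
proof -
  assume "in_B D u"
  then have "integrable lborel (\<lambda>x. \<bar>rho 2 x * u x\<bar>)" by (simp add: in_B_def)
  moreover have "\<bar>rho 2 x * u x\<bar> = lyap x * \<bar>u x\<bar>" for x
    using lyap_pos[of x] by (simp add: rho_2_eq_lyap abs_mult)
  ultimately show ?thesis by simp
qed

lemma in_B_integrable: "in_B D u \<Longrightarrow> integrable lborel u"
  by (rule Bochner_Integration.integrable_bound[OF in_B_integrable_lyap])
    (auto simp: in_B_def intro!: AE_I2, metis lyap_abs_mult(1,3))

lemma in_B_integrable_abs: "in_B D u \<Longrightarrow> integrable lborel (\<lambda>x. \<bar>u x\<bar>)"
  using in_B_integrable by auto

lemma in_B_square_integrable_on: "in_B D u \<Longrightarrow> integrable lborel (\<lambda>x. (indicator D x * u x)\<^sup>2)"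
  by (simp add: in_B_def)

lemma nn_integral_lyap_eq_L1w_norm:
  "in_B D u \<Longrightarrow> (\<integral>\<^sup>+x. ennreal (lyap x * \<bar>u x\<bar>) \<partial>lborel) = ennreal (L1w_norm 2 u)"
  by (subst nn_integral_eq_integral[OF in_B_integrable_lyap])
    (auto simp: L1w_norm_2_eq lyap_abs_mult intro!: AE_I2)

lemma nn_integral_square_eq_L2_norm_on:
  "in_B D u \<Longrightarrow> (\<integral>\<^sup>+x. ennreal ((indicator D x * u x)\<^sup>2) \<partial>lborel) = ennreal ((L2_norm_on D u)\<^sup>2)"
  by (subst nn_integral_eq_integral[OF in_B_square_integrable_on]) (auto simp: L2_norm_def)

lemma L1_norm_le_L1w_norm: "in_B D u \<Longrightarrow> L1_norm u \<le> L1w_norm 2 u"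
  unfolding L1_norm_def L1w_norm_2_eq
  by (intro integral_mono in_B_integrable_abs in_B_integrable_lyap) (use lyap_abs_mult in auto)

lemma norms_le_s_norm:
  assumes "in_B D u"
  shows "L1_norm u \<le> s_norm D u" "L1w_norm 2 u \<le> s_norm D u" "L2_norm_on D u \<le> s_norm D u"
  using L1_norm_le_L1w_norm[OF assms] L2_norm_nonneg[of "\<lambda>x. indicator D x * u x"]
    L1w_norm_nonneg[of u]
  by (auto simp: s_norm_def)

lemma in_B_cong_AE:
  assumes [measurable]: "D \<in> sets borel" and f: "in_B D f" and [measurable]: "h \<in> borel_measurable borel"
    and ae: "AE x in lborel. h x = f x"
  shows "in_B D h" "L1_norm h = L1_norm f" "L1w_norm 2 h = L1w_norm 2 f"
    "L2_norm_on D h = L2_norm_on D f" "s_norm D h = s_norm D f"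
proof -
  have ae1: "AE x in lborel. rho 2 x * h x = rho 2 x * f x" using ae by eventually_elim simp
  have ae2: "AE x in lborel. (indicator D x * h x)\<^sup>2 = (indicator D x * f x)\<^sup>2" using ae by eventually_elim simp
  have [measurable]: "f \<in> borel_measurable borel" using f by (simp add: in_B_def)
  have [measurable]: "rho 2 \<in> borel_measurable borel" unfolding rho_def[abs_def] by measurable
  show "in_B D h"
    using f by (simp add: in_B_def integrable_cong_AE[OF _ _ ae1] integrable_cong_AE[OF _ _ ae2])
  show "L1_norm h = L1_norm f" unfolding L1_norm_def
    by (intro integral_cong_AE) (use ae in \<open>auto elim!: AE_mp\<close>)
  show W: "L1w_norm 2 h = L1w_norm 2 f" unfolding L1w_norm_def
    by (intro integral_cong_AE) (use ae in \<open>auto elim!: AE_mp\<close>)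
  show Q: "L2_norm_on D h = L2_norm_on D f"
    unfolding L2_norm_def by (subst integral_cong_AE[OF _ _ ae2]) auto
  from W Q show "s_norm D h = s_norm D f" by (simp add: s_norm_def)
qed

lemma in_B_add_scaled:
  assumes [measurable]: "D \<in> sets borel" and f: "in_B D f" and g: "in_B D g"
  shows "in_B D (\<lambda>x. f x + c * g x)"
    and "L1_norm (\<lambda>x. f x + c * g x) \<le> L1_norm f + \<bar>c\<bar> * L1_norm g"
    and "L1w_norm 2 (\<lambda>x. f x + c * g x) \<le> L1w_norm 2 f + \<bar>c\<bar> * L1w_norm 2 g"
    and "L2_norm_on D (\<lambda>x. f x + c * g x) \<le> L2_norm_on D f + \<bar>c\<bar> * L2_norm_on D g"
    and "s_norm D (\<lambda>x. f x + c * g x) \<le> s_norm D f + \<bar>c\<bar> * s_norm D g"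
    and "(\<integral>x. f x + c * g x \<partial>lborel) = (\<integral>x. f x \<partial>lborel) + c * (\<integral>x. g x \<partial>lborel)"
proof -
  have [measurable]: "f \<in> borel_measurable borel" "g \<in> borel_measurable borel"
    using f g by (auto simp: in_B_def)
  have "integrable lborel (\<lambda>x. (c * (indicator D x * g x))\<^sup>2)"
    using integrable_mult_right[OF in_B_square_integrable_on[OF g], of "c\<^sup>2"] by (auto simp: power_mult_distrib)
  note Mink = Minkowski_integral_square[where a="\<lambda>x. indicator D x * f x" and M=lborel,
      OF _ _ in_B_square_integrable_on[OF f] this, simplified]
  have "integrable lborel (\<lambda>x. rho 2 x * (f x + c * g x))"
    using f g by (simp add: in_B_def algebra_simps)
  moreover have "integrable lborel (\<lambda>x. (indicator D x * (f x + c * g x))\<^sup>2)"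
    using Mink(1) by (simp add: algebra_simps)
  ultimately show sum_in_B: "in_B D (\<lambda>x. f x + c * g x)" by (simp add: in_B_def)
  have "L1w_norm 2 (\<lambda>x. f x + c * g x) \<le> (\<integral>x. lyap x * \<bar>f x\<bar> + \<bar>c\<bar> * (lyap x * \<bar>g x\<bar>) \<partial>lborel)"
    unfolding L1w_norm_2_eq
  proof (intro integral_mono)
    fix x
    have "lyap x * \<bar>f x + c * g x\<bar> \<le> lyap x * (\<bar>f x\<bar> + \<bar>c\<bar> * \<bar>g x\<bar>)"
      using lyap_pos[of x] by (intro mult_left_mono) (auto simp: abs_mult[symmetric] abs_triangle_ineq)
    then show "lyap x * \<bar>f x + c * g x\<bar> \<le> lyap x * \<bar>f x\<bar> + \<bar>c\<bar> * (lyap x * \<bar>g x\<bar>)"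
      by (simp add: algebra_simps)
  qed (use in_B_integrable_lyap[OF sum_in_B] in_B_integrable_lyap[OF f] in_B_integrable_lyap[OF g] in auto)
  then show W: "L1w_norm 2 (\<lambda>x. f x + c * g x) \<le> L1w_norm 2 f + \<bar>c\<bar> * L1w_norm 2 g"
    using in_B_integrable_lyap[OF f] in_B_integrable_lyap[OF g] by (simp add: L1w_norm_2_eq)
  have "(\<integral>x. (c * (indicator D x * g x))\<^sup>2 \<partial>lborel) = c\<^sup>2 * (\<integral>x. (indicator D x * g x)\<^sup>2 \<partial>lborel)"
    by (simp add: power_mult_distrib)
  then have "sqrt (\<integral>x. (c * (indicator D x * g x))\<^sup>2 \<partial>lborel) = \<bar>c\<bar> * L2_norm_on D g"
    by (simp add: L2_norm_def real_sqrt_mult)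
  then show Q: "L2_norm_on D (\<lambda>x. f x + c * g x) \<le> L2_norm_on D f + \<bar>c\<bar> * L2_norm_on D g"
    using Mink(2) by (simp add: L2_norm_def algebra_simps)
  with W show "s_norm D (\<lambda>x. f x + c * g x) \<le> s_norm D f + \<bar>c\<bar> * s_norm D g"
    by (simp add: s_norm_def algebra_simps)
  have "L1_norm (\<lambda>x. f x + c * g x) \<le> (\<integral>x. \<bar>f x\<bar> + \<bar>c\<bar> * \<bar>g x\<bar> \<partial>lborel)"
    unfolding L1_norm_def using in_B_integrable_abs[OF f] in_B_integrable_abs[OF g]
      in_B_integrable[OF f] in_B_integrable[OF g]
    by (intro integral_mono) (auto simp: abs_mult[symmetric] abs_triangle_ineq)
  then show "L1_norm (\<lambda>x. f x + c * g x) \<le> L1_norm f + \<bar>c\<bar> * L1_norm g"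
    using in_B_integrable_abs[OF f] in_B_integrable_abs[OF g] by (simp add: L1_norm_def)
  show "(\<integral>x. f x + c * g x \<partial>lborel) = (\<integral>x. f x \<partial>lborel) + c * (\<integral>x. g x \<partial>lborel)"
    using in_B_integrable[OF f] in_B_integrable[OF g] by simp
qed

section \<open>Doeblin contraction in \<open>L\<^sup>1\<close>\<close>

lemma ennreal_L1_norm_le: "ennreal (L1_norm f) \<le> (\<integral>\<^sup>+x. ennreal \<bar>f x\<bar> \<partial>lborel)"
proof (cases "integrable lborel (\<lambda>x. \<bar>f x\<bar>)")
  case True
  then show ?thesis by (simp add: L1_norm_def nn_integral_eq_integral)
next
  case False
  then show ?thesis by (simp add: L1_norm_def not_integrable_integral_eq)
qed

lemma nn_integral_minus_indicator:
  assumes [measurable]: "h \<in> borel_measurable borel" "D \<in> sets borel"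
    and D: "emeasure lborel D < \<infinity>" and mass: "(\<integral>\<^sup>+y. ennreal (h y) \<partial>lborel) = 1"
    and c: "0 \<le> c" and minor: "\<And>y. y \<in> D \<Longrightarrow> c \<le> h y" and nonneg: "\<And>y. 0 \<le> h y"
  shows "c * measure lborel D \<le> 1"
    and "(\<integral>\<^sup>+y. ennreal (h y - c * indicator D y) \<partial>lborel) = ennreal (1 - c * measure lborel D)"
proof -
  let ?rest = "\<integral>\<^sup>+y. ennreal (h y - c * indicator D y) \<partial>lborel"
  have "ennreal (h y) = ennreal c * indicator D y + ennreal (h y - c * indicator D y)" for y
    using minor[of y] nonneg[of y] c by (cases "y \<in> D") (auto simp: ennreal_plus[symmetric] simp del: ennreal_plus)
  then have "1 = (\<integral>\<^sup>+y. ennreal c * indicator D y + ennreal (h y - c * indicator D y) \<partial>lborel)"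
    using mass by simp
  also have "\<dots> = ennreal c * emeasure lborel D + ?rest"
    by (subst nn_integral_add) (auto simp: nn_integral_cmult)
  also have "ennreal c * emeasure lborel D = ennreal (c * measure lborel D)"
    using D c by (simp add: emeasure_eq_ennreal_measure ennreal_mult)
  finally have total: "1 = ennreal (c * measure lborel D) + ?rest" .
  then have "ennreal (c * measure lborel D) \<le> 1"
    by (metis add_increasing2 order_refl zero_le)
  then show le: "c * measure lborel D \<le> 1" by (simp add: ennreal_le_1)
  from total have "?rest = 1 - ennreal (c * measure lborel D)"
    using ennreal_add_diff_cancel_left[of "ennreal (c * measure lborel D)" ?rest] by simp
  also have "\<dots> = ennreal (1 - c * measure lborel D)"
    using c by (subst ennreal_1[symmetric], subst ennreal_minus) auto
  finally show "?rest = ennreal (1 - c * measure lborel D)" .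
qed

lemma L1_norm_le_of_kernel_majorant:
  assumes kt: "kernel_measurable kt" and [measurable]: "g \<in> borel_measurable borel" "D \<in> sets borel"
    and D: "emeasure lborel D < \<infinity>" and a: "0 \<le> a" and kt_nonneg: "\<And>x y. 0 \<le> kt x y"
    and mass: "\<And>x. (\<integral>\<^sup>+y. ennreal (kt x y) \<partial>lborel) = ennreal (m x)" and m: "\<And>x. 0 \<le> m x"
    and int_kt: "\<And>y. integrable lborel (\<lambda>x. kt x y * \<bar>g x\<bar>)"
    and int_m: "integrable lborel (\<lambda>x. \<bar>g x\<bar> * m x)"
    and pointwise: "\<And>y. \<bar>f y\<bar> \<le> a * indicator D y + (\<integral>x. kt x y * \<bar>g x\<bar> \<partial>lborel)"
  shows "L1_norm f \<le> a * measure lborel D + (\<integral>x. \<bar>g x\<bar> * m x \<partial>lborel)"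
proof -
  have [measurable]: "(\<lambda>x. kt x y) \<in> borel_measurable borel" "(\<lambda>y. kt x y) \<in> borel_measurable borel" for x y
    using kernel_measurable_column[OF kt] kernel_measurable_row[OF kt] by auto
  have [measurable]: "(\<lambda>z. kt (fst z) (snd z)) \<in> borel_measurable (borel \<Otimes>\<^sub>M borel)"
    using kt unfolding kernel_measurable_def by (simp add: measurable_lborel2[symmetric] sets_pair_measure_cong)
  have [measurable]: "(\<lambda>z. kt (snd z) (fst z)) \<in> borel_measurable (borel \<Otimes>\<^sub>M borel)"
    using kernel_measurable_swap_borel[OF kt] .
  have "ennreal (L1_norm f)
      \<le> (\<integral>\<^sup>+y. ennreal a * indicator D y + (\<integral>\<^sup>+x. ennreal (kt x y * \<bar>g x\<bar>) \<partial>lborel) \<partial>lborel)"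
  proof (rule order_trans[OF ennreal_L1_norm_le], intro nn_integral_mono)
    fix y
    have "(\<integral>\<^sup>+x. ennreal (kt x y * \<bar>g x\<bar>) \<partial>lborel) = ennreal (\<integral>x. kt x y * \<bar>g x\<bar> \<partial>lborel)"
      using int_kt kt_nonneg by (subst nn_integral_eq_integral) auto
    then show "ennreal \<bar>f y\<bar> \<le> ennreal a * indicator D y + (\<integral>\<^sup>+x. ennreal (kt x y * \<bar>g x\<bar>) \<partial>lborel)"
      using pointwise[of y] a kt_nonneg
      by (auto simp: indicator_def ennreal_plus[symmetric] integral_nonneg_AE simp del: ennreal_plus
          intro!: ennreal_leI)
  qed
  also have "\<dots> = ennreal a * emeasure lborel D + (\<integral>\<^sup>+y. (\<integral>\<^sup>+x. ennreal (kt x y * \<bar>g x\<bar>) \<partial>lborel) \<partial>lborel)"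
    by (subst nn_integral_add) (auto simp: nn_integral_cmult)
  also have "ennreal a * emeasure lborel D = ennreal (a * measure lborel D)"
    using a D by (simp add: emeasure_eq_ennreal_measure ennreal_mult)
  also have "(\<integral>\<^sup>+y. (\<integral>\<^sup>+x. ennreal (kt x y * \<bar>g x\<bar>) \<partial>lborel) \<partial>lborel)
      = (\<integral>\<^sup>+x. (\<integral>\<^sup>+y. ennreal (kt x y * \<bar>g x\<bar>) \<partial>lborel) \<partial>lborel)"
    by (rule lborel_pair.Fubini') simp
  also have "\<dots> = (\<integral>\<^sup>+x. ennreal (\<bar>g x\<bar> * m x) \<partial>lborel)"
  proof (intro nn_integral_cong)
    fix x
    have "(\<integral>\<^sup>+y. ennreal (kt x y * \<bar>g x\<bar>) \<partial>lborel) = (\<integral>\<^sup>+y. ennreal \<bar>g x\<bar> * ennreal (kt x y) \<partial>lborel)"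
      using kt_nonneg by (intro nn_integral_cong) (simp add: ennreal_mult mult.commute)
    also have "\<dots> = ennreal \<bar>g x\<bar> * ennreal (m x)" by (subst nn_integral_cmult) (auto simp: mass)
    finally show "(\<integral>\<^sup>+y. ennreal (kt x y * \<bar>g x\<bar>) \<partial>lborel) = ennreal (\<bar>g x\<bar> * m x)"
      using m[of x] by (simp add: ennreal_mult)
  qed
  also have "\<dots> = ennreal (\<integral>x. \<bar>g x\<bar> * m x \<partial>lborel)"
    using int_m m by (intro nn_integral_eq_integral) auto
  finally show ?thesis
    using a m measure_nonneg[of lborel D]
    by (simp add: ennreal_plus[symmetric] ennreal_le_iff integral_nonneg_AE del: ennreal_plus)
qed

text \<open>Splitting off the minorizing part \<open>\<eta> 1\<^sub>S(x) 1\<^sub>D(y)\<close> of the kernel: on it the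
  transfer operator only sees the mass of \<open>g\<close> on \<open>S\<close>, on the rest it is an \<open>L\<^sup>1\<close> contraction.\<close>

lemma L1_norm_transfer_op_minorized:
  assumes k: "kernel_measurable k" and nonneg: "\<And>x y. 0 \<le> k x y" and bounded: "\<And>x y. k x y \<le> C"
    and mass: "\<And>x. (\<integral>\<^sup>+y. ennreal (k x y) \<partial>lborel) = 1"
    and [measurable]: "S \<in> sets borel" "D \<in> sets borel" and D: "emeasure lborel D < \<infinity>"
    and \<eta>: "0 < \<eta>" and minor: "\<And>x y. x \<in> S \<Longrightarrow> y \<in> D \<Longrightarrow> \<eta> \<le> k x y"
    and g: "integrable lborel g"
  defines "e \<equiv> \<eta> * measure lborel D"
  shows "L1_norm (transfer_op k g)
     \<le> e * \<bar>\<integral>x. indicator S x * g x \<partial>lborel\<bar> + (\<integral>x. \<bar>g x\<bar> * (1 - e * indicator S x) \<partial>lborel)"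
proof -
  have [measurable]: "g \<in> borel_measurable borel" using g by auto
  have [measurable]: "(\<lambda>z. k (fst z) (snd z)) \<in> borel_measurable (lborel \<Otimes>\<^sub>M lborel)"
    using k by (simp add: kernel_measurable_def)
  have [measurable]: "(\<lambda>x. k x y) \<in> borel_measurable borel" "(\<lambda>y. k x y) \<in> borel_measurable borel" for x y
    using kernel_measurable_column[OF k] kernel_measurable_row[OF k] by auto
  define kt where "kt x y = k x y - \<eta> * indicator S x * indicator D y" for x y
  have kt: "kernel_measurable kt" unfolding kernel_measurable_def kt_def by measurable
  have kt_nonneg: "0 \<le> kt x y" for x y
    using minor[of x y] nonneg[of x y] by (auto simp: kt_def indicator_def)
  have kt_bounded: "\<bar>kt x y\<bar> \<le> \<bar>C\<bar>" for x y
    using \<eta> bounded[of x y] kt_nonneg[of x y] by (auto simp: kt_def indicator_def)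
  have kt_mass: "(\<integral>\<^sup>+y. ennreal (kt x y) \<partial>lborel) = ennreal (1 - e * indicator S x)"
    and e_le: "e * indicator S x \<le> 1" for x
  proof -
    have "\<And>y. y \<in> D \<Longrightarrow> \<eta> * indicator S x \<le> k x y"
      using minor nonneg \<eta> by (auto simp: indicator_def)
    note split = nn_integral_minus_indicator[of "k x" D "\<eta> * indicator S x", OF _ _ D mass _ this nonneg]
    show "e * indicator S x \<le> 1" using split(1) \<eta> by (simp add: e_def mult_ac)
    show "(\<integral>\<^sup>+y. ennreal (kt x y) \<partial>lborel) = ennreal (1 - e * indicator S x)"
      using split(2) \<eta> by (simp add: kt_def e_def mult_ac)
  qed
  have int_kt_g: "integrable lborel (\<lambda>x. kt x y * g x)" for y
    by (rule Bochner_Integration.integrable_bound[OF integrable_mult_right[OF integrable_abs[OF g], of "\<bar>C\<bar>"]])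
      (auto simp: kt_def abs_mult intro!: AE_I2 mult_right_mono kt_bounded[unfolded kt_def])
  define IS where "IS = (\<integral>x. indicator S x * g x \<partial>lborel)"
  have "\<bar>transfer_op k g y\<bar> \<le> \<eta> * \<bar>IS\<bar> * indicator D y + (\<integral>x. kt x y * \<bar>g x\<bar> \<partial>lborel)" for y
  proof -
    have int_S: "integrable lborel (\<lambda>x. indicator S x * g x)"
      by (rule Bochner_Integration.integrable_bound[OF integrable_abs[OF g]]) (auto simp: indicator_def)
    have "transfer_op k g y = (\<integral>x. (\<eta> * indicator D y) * (indicator S x * g x) + kt x y * g x \<partial>lborel)"
      unfolding transfer_op_def by (intro Bochner_Integration.integral_cong) (auto simp: kt_def algebra_simps)
    also have "\<dots> = \<eta> * indicator D y * IS + (\<integral>x. kt x y * g x \<partial>lborel)"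
      using int_S int_kt_g[of y] by (simp add: IS_def)
    finally have "transfer_op k g y = \<eta> * indicator D y * IS + (\<integral>x. kt x y * g x \<partial>lborel)" .
    moreover have "\<bar>\<integral>x. kt x y * g x \<partial>lborel\<bar> \<le> (\<integral>x. kt x y * \<bar>g x\<bar> \<partial>lborel)"
      using integral_abs_bound[of lborel "\<lambda>x. kt x y * g x"] kt_nonneg by (simp add: abs_mult)
    moreover have "\<bar>\<eta> * indicator D y * IS\<bar> = \<eta> * \<bar>IS\<bar> * indicator D y"
      using \<eta> by (simp add: abs_mult)
    ultimately show ?thesis by (smt (verit))
  qed
  moreover have "integrable lborel (\<lambda>x. \<bar>g x\<bar> * (1 - e * indicator S x))"
    using e_le \<eta>
    by (intro Bochner_Integration.integrable_bound[OF integrable_abs[OF g]] AE_I2)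
      (auto simp: abs_mult e_def intro!: mult_left_le)
  ultimately have "L1_norm (transfer_op k g)
      \<le> \<eta> * \<bar>IS\<bar> * measure lborel D + (\<integral>x. \<bar>g x\<bar> * (1 - e * indicator S x) \<partial>lborel)"
    using integrable_abs[OF int_kt_g] kt_nonneg e_le \<eta>
    by (intro L1_norm_le_of_kernel_majorant[OF kt _ _ D _ kt_nonneg kt_mass]) (auto simp: abs_mult)
  then show ?thesis by (simp add: IS_def e_def mult_ac)
qed

lemma L1_norm_transfer_op_minorized_zero_mean:
  assumes k: "kernel_measurable k" and nonneg: "\<And>x y. 0 \<le> k x y" and bounded: "\<And>x y. k x y \<le> C"
    and mass: "\<And>x. (\<integral>\<^sup>+y. ennreal (k x y) \<partial>lborel) = 1"
    and [measurable]: "S \<in> sets borel" "D \<in> sets borel" and D: "emeasure lborel D < \<infinity>"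
    and \<eta>: "0 < \<eta>" and minor: "\<And>x y. x \<in> S \<Longrightarrow> y \<in> D \<Longrightarrow> \<eta> \<le> k x y"
    and g: "integrable lborel g" and g0: "(\<integral>x. g x \<partial>lborel) = 0"
  defines "e \<equiv> \<eta> * measure lborel D"
  shows "L1_norm (transfer_op k g) \<le> (1 - e) * L1_norm g + 2 * e * (\<integral>x. indicator (- S) x * \<bar>g x\<bar> \<partial>lborel)"
proof -
  have [measurable]: "g \<in> borel_measurable borel" using g by auto
  have int_S: "integrable lborel (\<lambda>x. indicator S x * \<bar>g x\<bar>)" "integrable lborel (\<lambda>x. indicator S x * g x)"
    by (auto intro!: Bochner_Integration.integrable_bound[OF integrable_abs[OF g]] simp: indicator_def)
  define J where "J = (\<integral>x. indicator (- S) x * \<bar>g x\<bar> \<partial>lborel)"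
  have "J = (\<integral>x. \<bar>g x\<bar> - indicator S x * \<bar>g x\<bar> \<partial>lborel)"
    unfolding J_def by (intro Bochner_Integration.integral_cong) (auto simp: indicator_def)
  then have J: "J = L1_norm g - (\<integral>x. indicator S x * \<bar>g x\<bar> \<partial>lborel)"
    using integrable_abs[OF g] int_S by (simp add: L1_norm_def)
  have int_nS: "integrable lborel (\<lambda>x. indicator (- S) x * g x)"
    by (auto intro!: Bochner_Integration.integrable_bound[OF integrable_abs[OF g]] simp: indicator_def)
  have "(\<integral>x. g x \<partial>lborel) = (\<integral>x. indicator S x * g x + indicator (- S) x * g x \<partial>lborel)"
    by (intro Bochner_Integration.integral_cong) (auto simp: indicator_def)
  then have "(\<integral>x. indicator S x * g x \<partial>lborel) = - (\<integral>x. indicator (- S) x * g x \<partial>lborel)"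
    using g0 int_S(2) int_nS by simp
  then have IS: "\<bar>\<integral>x. indicator S x * g x \<partial>lborel\<bar> \<le> J"
    using integral_abs_bound[of lborel "\<lambda>x. indicator (- S) x * g x"] by (simp add: J_def abs_mult)
  have "(\<integral>x. \<bar>g x\<bar> * (1 - e * indicator S x) \<partial>lborel) = (1 - e) * L1_norm g + e * J"
    using g int_S by (simp add: J L1_norm_def algebra_simps)
  moreover have "e \<ge> 0" using \<eta> by (simp add: e_def)
  ultimately show ?thesis
    using L1_norm_transfer_op_minorized[OF assms(1-10)] mult_left_mono[OF IS, of e]
    by (simp add: e_def J_def)
qed

section \<open>Kernels with a drift condition\<close>

definition uniform_density :: "'a::euclidean_space set \<Rightarrow> 'a \<Rightarrow> real" where
  "uniform_density D x = indicator D x / measure lborel D"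

lemma uniform_density:
  assumes D: "compact D" "0 < measure lborel D"
  shows "in_B D (uniform_density D)" "(\<integral>x. uniform_density D x \<partial>lborel) = 1"
proof -
  have [measurable]: "D \<in> sets borel" using D by (simp add: borel_compact)
  have [measurable]: "uniform_density D \<in> borel_measurable borel"
    unfolding uniform_density_def[abs_def] by measurable
  have int_D: "integrable lborel (indicator D :: 'a \<Rightarrow> real)"
    using emeasure_compact_finite[OF D(1)] by (intro integrable_real_indicator) auto
  obtain VD where VD: "1 \<le> VD" "\<And>y. y \<in> D \<Longrightarrow> lyap y \<le> VD"
    using lyap_bounded_on_compact[OF D(1)] by blast
  have "integrable lborel (\<lambda>x. rho 2 x * uniform_density D x)"
    by (rule Bochner_Integration.integrable_bound[OF integrable_mult_left[OF int_D, of "VD / measure lborel D"]])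
      (use D VD lyap_pos in \<open>auto intro!: AE_I2 divide_right_mono
        simp: uniform_density_def rho_2_eq_lyap indicator_def abs_of_pos[OF lyap_pos]\<close>)
  moreover have "integrable lborel (\<lambda>x. (indicator D x * uniform_density D x)\<^sup>2)"
    by (rule Bochner_Integration.integrable_bound[OF integrable_mult_left[OF int_D, of "(1 / measure lborel D)\<^sup>2"]])
      (auto intro!: AE_I2 simp: uniform_density_def indicator_def power_divide)
  ultimately show "in_B D (uniform_density D)" by (simp add: in_B_def)
  show "(\<integral>x. uniform_density D x \<partial>lborel) = 1"
    using D by (simp add: uniform_density_def)
qed

locale drift_kernel =
  fixes \<kappa> :: "'a::euclidean_space \<Rightarrow> 'a \<Rightarrow> real" and D :: "'a set" and C0 \<gamma> Cd :: real
  assumes measurable_kernel: "kernel_measurable \<kappa>"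
    and nonneg: "\<And>x y. 0 \<le> \<kappa> x y" and bounded: "\<And>x y. \<kappa> x y \<le> C0"
    and mass_one: "\<And>x. (\<integral>\<^sup>+y. ennreal (\<kappa> x y) \<partial>lborel) = 1"
    and drift: "\<And>x. (\<integral>\<^sup>+y. ennreal (lyap y * \<kappa> x y) \<partial>lborel) \<le> ennreal (\<gamma> * lyap x + Cd)"
    and drift_rate: "0 \<le> \<gamma>" "\<gamma> < 1" and drift_const: "0 \<le> Cd"
    and minorization: "\<And>R. \<exists>\<eta>>0. \<forall>x y. lyap x \<le> R \<longrightarrow> y \<in> D \<longrightarrow> \<eta> \<le> \<kappa> x y"
    and compact_D: "compact D" and measure_D_pos: "0 < measure lborel D"
begin

lemma C0_nonneg: "0 \<le> C0"
  using nonneg bounded order_trans by blast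

lemma D_sets [measurable]: "D \<in> sets borel"
  using compact_D by (simp add: borel_compact)

lemma emeasure_D_finite: "emeasure lborel D < \<infinity>"
  using compact_D by (rule emeasure_compact_finite)

lemma integrable_indicator_D: "integrable lborel (indicator D :: 'a \<Rightarrow> real)"
  using emeasure_D_finite by (intro integrable_real_indicator) auto

lemma kernel_sections [measurable]:
  "(\<lambda>x. \<kappa> x y) \<in> borel_measurable borel" "(\<lambda>y. \<kappa> x y) \<in> borel_measurable borel"
  using kernel_measurable_column[OF measurable_kernel] kernel_measurable_row[OF measurable_kernel] by auto

lemma integrable_kernel_mult:
  assumes "in_B D u" shows "integrable lborel (\<lambda>x. \<kappa> x y * u x)"
proof -
  have [measurable]: "u \<in> borel_measurable borel" using in_B_measurable[OF assms] .
  show ?thesis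
    by (rule Bochner_Integration.integrable_bound[OF integrable_mult_right[OF in_B_integrable_abs[OF assms], of C0]])
      (auto simp: abs_mult nonneg abs_of_nonneg[OF C0_nonneg] intro!: AE_I2 mult_right_mono bounded)
qed

lemma abs_transfer_op_le_L1_norm:
  assumes "in_B D u" shows "\<bar>transfer_op \<kappa> u y\<bar> \<le> C0 * L1_norm u"
proof -
  have "\<bar>transfer_op \<kappa> u y\<bar> \<le> (\<integral>x. \<bar>\<kappa> x y * u x\<bar> \<partial>lborel)"
    unfolding transfer_op_def by (rule integral_abs_bound)
  also have "\<dots> \<le> (\<integral>x. C0 * \<bar>u x\<bar> \<partial>lborel)"
    using integrable_abs[OF integrable_kernel_mult[OF assms]] in_B_integrable_abs[OF assms]
    by (intro integral_mono) (auto simp: abs_mult nonneg intro!: mult_right_mono bounded)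
  finally show ?thesis by (simp add: L1_norm_def)
qed

lemma nn_integral_lyap_transfer_op_le:
  assumes "in_B D u"
  shows "(\<integral>\<^sup>+y. ennreal (lyap y * \<bar>transfer_op \<kappa> u y\<bar>) \<partial>lborel)
     \<le> ennreal (\<gamma> * L1w_norm 2 u + Cd * L1_norm u)"
proof -
  have [measurable]: "u \<in> borel_measurable borel" using in_B_measurable[OF assms] .
  have "(\<integral>\<^sup>+y. ennreal (lyap y * \<bar>transfer_op \<kappa> u y\<bar>) \<partial>lborel)
     \<le> (\<integral>\<^sup>+x. ennreal \<bar>u x\<bar> * (\<integral>\<^sup>+y. ennreal (lyap y * \<bar>\<kappa> x y\<bar>) \<partial>lborel) \<partial>lborel)"
    by (rule nn_integral_weighted_transfer_op_le[OF measurable_kernel]) (auto intro: less_imp_le lyap_pos)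
  also have "\<dots> \<le> (\<integral>\<^sup>+x. ennreal (\<gamma> * (lyap x * \<bar>u x\<bar>) + Cd * \<bar>u x\<bar>) \<partial>lborel)"
  proof (intro nn_integral_mono)
    fix x
    have "ennreal \<bar>u x\<bar> * (\<integral>\<^sup>+y. ennreal (lyap y * \<bar>\<kappa> x y\<bar>) \<partial>lborel)
        \<le> ennreal \<bar>u x\<bar> * ennreal (\<gamma> * lyap x + Cd)"
      using drift[of x] by (intro mult_left_mono) (auto simp: nonneg)
    also have "\<dots> = ennreal (\<gamma> * (lyap x * \<bar>u x\<bar>) + Cd * \<bar>u x\<bar>)"
      using drift_rate drift_const lyap_pos[of x]
      by (subst ennreal_mult[symmetric]) (auto simp: algebra_simps)
    finally show "ennreal \<bar>u x\<bar> * (\<integral>\<^sup>+y. ennreal (lyap y * \<bar>\<kappa> x y\<bar>) \<partial>lborel) \<le> \<dots>" .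
  qed
  also have "\<dots> = ennreal (\<integral>x. \<gamma> * (lyap x * \<bar>u x\<bar>) + Cd * \<bar>u x\<bar> \<partial>lborel)"
    using in_B_integrable_lyap[OF assms] in_B_integrable_abs[OF assms] drift_rate drift_const
      lyap_abs_mult less_imp_le[OF lyap_pos]
    by (intro nn_integral_eq_integral) (auto intro!: AE_I2 add_nonneg_nonneg mult_nonneg_nonneg)
  also have "(\<integral>x. \<gamma> * (lyap x * \<bar>u x\<bar>) + Cd * \<bar>u x\<bar> \<partial>lborel) = \<gamma> * L1w_norm 2 u + Cd * L1_norm u"
    using in_B_integrable_lyap[OF assms] in_B_integrable_abs[OF assms]
    by (simp add: L1w_norm_2_eq L1_norm_def)
  finally show ?thesis .
qed

lemma in_B_transfer_op:
  assumes "in_B D u" shows "in_B D (transfer_op \<kappa> u)"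
proof -
  have [measurable]: "u \<in> borel_measurable borel" using in_B_measurable[OF assms] .
  have [measurable]: "transfer_op \<kappa> u \<in> borel_measurable borel"
    using transfer_op_measurable[OF measurable_kernel, of u] by simp
  have "integrable lborel (\<lambda>y. lyap y * \<bar>transfer_op \<kappa> u y\<bar>)"
    using nn_integral_lyap_transfer_op_le[OF assms]
    by (intro integrableI_bounded) (auto simp: lyap_abs_mult(3) order_le_less_trans)
  then have "integrable lborel (\<lambda>y. rho 2 y * transfer_op \<kappa> u y)"
    by (subst integrable_abs_iff[symmetric]) (auto simp: rho_2_eq_lyap abs_mult lyap_abs_mult(3) lyap_pos less_imp_le)
  moreover have "integrable lborel (\<lambda>y. (indicator D y * transfer_op \<kappa> u y)\<^sup>2)"
    by (rule Bochner_Integration.integrable_bound[OF integrable_mult_right[OF integrable_indicator_D, of "(C0 * L1_norm u)\<^sup>2"]])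
      (auto intro!: AE_I2 simp: indicator_def power_mono abs_le_square_iff[symmetric]
        abs_of_nonneg[OF mult_nonneg_nonneg[OF C0_nonneg L1_norm_nonneg]] abs_transfer_op_le_L1_norm[OF assms])
  ultimately show ?thesis by (simp add: in_B_def)
qed

lemma L1w_norm_transfer_op_le:
  assumes "in_B D u" shows "L1w_norm 2 (transfer_op \<kappa> u) \<le> \<gamma> * L1w_norm 2 u + Cd * L1_norm u"
proof -
  have "0 \<le> \<gamma> * L1w_norm 2 u + Cd * L1_norm u"
    using drift_rate drift_const L1w_norm_nonneg L1_norm_nonneg by (intro add_nonneg_nonneg mult_nonneg_nonneg) auto
  then show ?thesis
    using nn_integral_lyap_transfer_op_le[OF assms] nn_integral_lyap_eq_L1w_norm[OF in_B_transfer_op[OF assms]]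
    by (simp add: ennreal_le_iff)
qed

lemma L2_norm_on_transfer_op_le:
  assumes "in_B D u" shows "L2_norm_on D (transfer_op \<kappa> u) \<le> C0 * sqrt (measure lborel D) * L1_norm u"
proof -
  have "(\<integral>y. (indicator D y * transfer_op \<kappa> u y)\<^sup>2 \<partial>lborel) \<le> (\<integral>y. indicator D y * (C0 * L1_norm u)\<^sup>2 \<partial>lborel)"
    using in_B_square_integrable_on[OF in_B_transfer_op[OF assms]]
      integrable_mult_left[OF integrable_indicator_D, of "(C0 * L1_norm u)\<^sup>2"]
    by (intro integral_mono)
      (auto simp: indicator_def power_mono abs_le_square_iff[symmetric]
        abs_of_nonneg[OF mult_nonneg_nonneg[OF C0_nonneg L1_norm_nonneg]] abs_transfer_op_le_L1_norm[OF assms])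
  then have "L2_norm_on D (transfer_op \<kappa> u) \<le> sqrt (measure lborel D * (C0 * L1_norm u)\<^sup>2)"
    by (simp add: L2_norm_def mult.commute)
  also have "\<dots> = C0 * sqrt (measure lborel D) * L1_norm u"
    using C0_nonneg L1_norm_nonneg[of u] by (simp add: real_sqrt_mult abs_of_nonneg)
  finally show ?thesis .
qed

text \<open>The sublevel set \<open>{lyap \<le> R}\<close> carries all but \<open>L1w_norm 2 g / R\<close> of the mass of \<open>g\<close>.\<close>

lemma L1_norm_transfer_op_zero_mean:
  assumes R: "0 < R"
  obtains e where "0 < e"
    and "\<And>g :: 'a \<Rightarrow> real. in_B D g \<Longrightarrow> (\<integral>x. g x \<partial>lborel) = 0 \<Longrightarrow>
           L1_norm (transfer_op \<kappa> g) \<le> (1 - e) * L1_norm g + 2 * e / R * L1w_norm 2 g"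
proof -
  obtain \<eta> where \<eta>: "0 < \<eta>" "\<And>x y. lyap x \<le> R \<Longrightarrow> y \<in> D \<Longrightarrow> \<eta> \<le> \<kappa> x y"
    using minorization[of R] by blast
  define S :: "'a set" where "S = {x. lyap x \<le> R}"
  have [measurable]: "S \<in> sets borel" unfolding S_def by measurable
  define e where "e = \<eta> * measure lborel D"
  have "0 < e" using \<eta> measure_D_pos by (simp add: e_def)
  moreover have "L1_norm (transfer_op \<kappa> g) \<le> (1 - e) * L1_norm g + 2 * e / R * L1w_norm 2 g"
    if g: "in_B D g" and g0: "(\<integral>x. g x \<partial>lborel) = 0" for g
  proof -
    have [measurable]: "g \<in> borel_measurable borel" using in_B_measurable[OF g] .
    have "(\<integral>x. indicator (- S) x * \<bar>g x\<bar> \<partial>lborel) \<le> (\<integral>x. lyap x * \<bar>g x\<bar> / R \<partial>lborel)"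
    proof (intro integral_mono)
      show "integrable lborel (\<lambda>x. indicator (- S) x * \<bar>g x\<bar>)"
        by (auto intro!: Bochner_Integration.integrable_bound[OF in_B_integrable_abs[OF g]] simp: indicator_def)
      show "integrable lborel (\<lambda>x. lyap x * \<bar>g x\<bar> / R)" using in_B_integrable_lyap[OF g] by simp
      fix x show "indicator (- S) x * \<bar>g x\<bar> \<le> lyap x * \<bar>g x\<bar> / R"
        using R lyap_abs_mult(2)[of x "g x"] mult_right_mono[of R "lyap x" "\<bar>g x\<bar>"]
        by (auto simp: S_def indicator_def field_simps)
    qed
    then have "(\<integral>x. indicator (- S) x * \<bar>g x\<bar> \<partial>lborel) \<le> L1w_norm 2 g / R"
      by (simp add: L1w_norm_2_eq)
    then show ?thesis
      using L1_norm_transfer_op_minorized_zero_mean[OF measurable_kernel nonneg bounded mass_one _ D_sets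
          emeasure_D_finite \<eta>(1) _ in_B_integrable[OF g] g0, of S] \<eta>(2) \<open>0 < e\<close>
        mult_left_mono[of _ "L1w_norm 2 g / R" "2 * e"]
      by (fastforce simp: S_def e_def)
  qed
  ultimately show ?thesis using that by blast
qed

end

section \<open>Small Hilbert--Schmidt perturbations\<close>

definition small_HS_kernel :: "'a::euclidean_space set \<Rightarrow> real \<Rightarrow> ('a \<Rightarrow> 'a \<Rightarrow> real) \<Rightarrow> bool" where
  "small_HS_kernel D \<epsilon> p \<longleftrightarrow> kernel_measurable p \<and> (\<forall>x y. x \<notin> D \<or> y \<notin> D \<longrightarrow> p x y = 0)
     \<and> (\<integral>\<^sup>+z. ennreal ((p (fst z) (snd z))\<^sup>2) \<partial>(lborel \<Otimes>\<^sub>M lborel)) \<le> ennreal (\<epsilon>\<^sup>2)"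

locale small_kernel =
  fixes D :: "'a::euclidean_space set" and p :: "'a \<Rightarrow> 'a \<Rightarrow> real" and \<epsilon> VD :: real
  assumes compact_D: "compact D" and small: "small_HS_kernel D \<epsilon> p" and eps_nonneg: "0 \<le> \<epsilon>"
    and VD: "1 \<le> VD" "\<And>y. y \<in> D \<Longrightarrow> lyap y \<le> VD"
begin

lemma D_sets [measurable]: "D \<in> sets borel"
  using compact_D by (simp add: borel_compact)

lemma p_measurable: "kernel_measurable p"
  using small by (simp add: small_HS_kernel_def)

lemma p_sections [measurable]: "(\<lambda>x. p x y) \<in> borel_measurable borel" "(\<lambda>y. p x y) \<in> borel_measurable borel"
  using kernel_measurable_column[OF p_measurable] kernel_measurable_row[OF p_measurable] by auto

lemma transfer_op_p_outside: "y \<notin> D \<Longrightarrow> transfer_op p u y = 0"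
  using small by (simp add: transfer_op_def small_HS_kernel_def)

lemma indicator_mult_transfer_op_p: "indicator D y * transfer_op p u y = transfer_op p u y"
  by (auto simp: indicator_def transfer_op_p_outside)

lemma nn_integral_abs_transfer_op_p_square_le:
  assumes u: "in_B D u"
  shows "(\<integral>\<^sup>+y. (\<integral>\<^sup>+x. ennreal \<bar>p x y * u x\<bar> \<partial>lborel)\<^sup>2 \<partial>lborel) \<le> ennreal (\<epsilon>\<^sup>2 * (L2_norm_on D u)\<^sup>2)"
proof -
  have [measurable]: "u \<in> borel_measurable borel" using in_B_measurable[OF u] .
  have "(\<integral>\<^sup>+y. (\<integral>\<^sup>+x. ennreal \<bar>p x y * u x\<bar> \<partial>lborel)\<^sup>2 \<partial>lborel)
     \<le> (\<integral>\<^sup>+z. ennreal ((p (fst z) (snd z))\<^sup>2) \<partial>(lborel \<Otimes>\<^sub>M lborel)) * ennreal ((L2_norm_on D u)\<^sup>2)"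
    using nn_integral_transfer_op_square_le[OF p_measurable, of u D] small
    by (simp add: nn_integral_square_eq_L2_norm_on[OF u] small_HS_kernel_def)
  also have "\<dots> \<le> ennreal (\<epsilon>\<^sup>2) * ennreal ((L2_norm_on D u)\<^sup>2)"
    using small by (intro mult_right_mono) (auto simp: small_HS_kernel_def)
  finally show ?thesis by (simp add: ennreal_mult)
qed

lemma AE_integrable_p_mult:
  assumes u: "in_B D u" shows "AE y in lborel. integrable lborel (\<lambda>x. p x y * u x)"
proof -
  have [measurable]: "u \<in> borel_measurable borel" using in_B_measurable[OF u] .
  have [measurable]: "(\<lambda>z. p (snd z) (fst z)) \<in> borel_measurable (borel \<Otimes>\<^sub>M borel)"
    using kernel_measurable_swap_borel[OF p_measurable] .
  have "AE y in lborel. (\<integral>\<^sup>+x. ennreal \<bar>p x y * u x\<bar> \<partial>lborel)\<^sup>2 \<noteq> \<infinity>"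
    using nn_integral_abs_transfer_op_p_square_le[OF u]
    by (intro nn_integral_PInf_AE) (auto simp: top_unique)
  then show ?thesis
  proof eventually_elim
    case (elim y)
    then have "(\<integral>\<^sup>+x. ennreal \<bar>p x y * u x\<bar> \<partial>lborel) < \<infinity>"
      by (simp add: less_top power_eq_top_ennreal)
    then show ?case by (intro integrableI_bounded) auto
  qed
qed

lemma transfer_op_p_square:
  assumes u: "in_B D u"
  shows "integrable lborel (\<lambda>y. (transfer_op p u y)\<^sup>2)"
    and "(\<integral>y. (transfer_op p u y)\<^sup>2 \<partial>lborel) \<le> \<epsilon>\<^sup>2 * (L2_norm_on D u)\<^sup>2"
proof -
  have [measurable]: "u \<in> borel_measurable borel" using in_B_measurable[OF u] .
  have [measurable]: "transfer_op p u \<in> borel_measurable borel"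
    using transfer_op_measurable[OF p_measurable, of u] by simp
  have "(\<integral>\<^sup>+y. ennreal ((transfer_op p u y)\<^sup>2) \<partial>lborel) \<le> (\<integral>\<^sup>+y. (\<integral>\<^sup>+x. ennreal \<bar>p x y * u x\<bar> \<partial>lborel)\<^sup>2 \<partial>lborel)"
  proof (intro nn_integral_mono)
    fix y
    have "ennreal ((transfer_op p u y)\<^sup>2) = (ennreal \<bar>transfer_op p u y\<bar>)\<^sup>2" by (simp add: ennreal_power)
    also have "\<dots> \<le> (\<integral>\<^sup>+x. ennreal \<bar>p x y * u x\<bar> \<partial>lborel)\<^sup>2" by (intro power_mono abs_transfer_op_le) auto
    finally show "ennreal ((transfer_op p u y)\<^sup>2) \<le> (\<integral>\<^sup>+x. ennreal \<bar>p x y * u x\<bar> \<partial>lborel)\<^sup>2" .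
  qed
  also note nn_integral_abs_transfer_op_p_square_le[OF u]
  finally have le: "(\<integral>\<^sup>+y. ennreal ((transfer_op p u y)\<^sup>2) \<partial>lborel) \<le> ennreal (\<epsilon>\<^sup>2 * (L2_norm_on D u)\<^sup>2)" .
  show int: "integrable lborel (\<lambda>y. (transfer_op p u y)\<^sup>2)"
    by (rule integrableI_bounded) (use le in \<open>auto simp: order_le_less_trans\<close>)
  have "ennreal (\<integral>y. (transfer_op p u y)\<^sup>2 \<partial>lborel) \<le> ennreal (\<epsilon>\<^sup>2 * (L2_norm_on D u)\<^sup>2)"
    using le by (subst nn_integral_eq_integral[OF int, symmetric]) auto
  then show "(\<integral>y. (transfer_op p u y)\<^sup>2 \<partial>lborel) \<le> \<epsilon>\<^sup>2 * (L2_norm_on D u)\<^sup>2"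
    by (simp add: ennreal_le_iff)
qed

lemma L2_norm_on_transfer_op_p_le:
  assumes u: "in_B D u" shows "L2_norm_on D (transfer_op p u) \<le> \<epsilon> * L2_norm_on D u"
proof -
  have "L2_norm_on D (transfer_op p u) \<le> sqrt (\<epsilon>\<^sup>2 * (L2_norm_on D u)\<^sup>2)"
    using transfer_op_p_square(2)[OF u] by (simp add: L2_norm_def indicator_mult_transfer_op_p)
  also have "\<dots> = \<epsilon> * L2_norm_on D u"
    using eps_nonneg by (simp add: real_sqrt_mult abs_of_nonneg[OF L2_norm_nonneg])
  finally show ?thesis .
qed

lemma L1_norm_transfer_op_p_le:
  assumes u: "in_B D u"
  shows "integrable lborel (\<lambda>y. \<bar>transfer_op p u y\<bar>)"
    and "L1_norm (transfer_op p u) \<le> sqrt (measure lborel D) * (\<epsilon> * L2_norm_on D u)"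
proof -
  have [measurable]: "u \<in> borel_measurable borel" using in_B_measurable[OF u] .
  have [measurable]: "transfer_op p u \<in> borel_measurable borel"
    using transfer_op_measurable[OF p_measurable, of u] by simp
  have ind2: "(\<lambda>x. (indicator D x :: real)\<^sup>2) = indicator D" by (auto simp: indicator_def fun_eq_iff)
  have "integrable lborel (indicator D :: 'a \<Rightarrow> real)"
    using emeasure_compact_finite[OF compact_D] by (intro integrable_real_indicator) auto
  then have "integrable lborel (\<lambda>x. (indicator D x :: real)\<^sup>2)" by (simp add: ind2)
  note cs = Cauchy_Schwarz_integral[where a="indicator D" and b="transfer_op p u" and M=lborel,
      OF _ _ this transfer_op_p_square(1)[OF u], simplified]
  show "integrable lborel (\<lambda>y. \<bar>transfer_op p u y\<bar>)"
    using integrable_abs[OF cs(1)] by (simp add: indicator_mult_transfer_op_p)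
  have "(L1_norm (transfer_op p u))\<^sup>2 \<le> (\<integral>x. (indicator D x :: real)\<^sup>2 \<partial>lborel) * (\<integral>y. (transfer_op p u y)\<^sup>2 \<partial>lborel)"
    using cs(2) by (simp add: L1_norm_def abs_mult indicator_mult_transfer_op_p[unfolded indicator_def] indicator_def)
  also have "\<dots> \<le> measure lborel D * (\<epsilon>\<^sup>2 * (L2_norm_on D u)\<^sup>2)"
    by (intro mult_mono transfer_op_p_square(2)[OF u]) (auto simp: ind2)
  finally have "sqrt ((L1_norm (transfer_op p u))\<^sup>2) \<le> sqrt (measure lborel D * (\<epsilon>\<^sup>2 * (L2_norm_on D u)\<^sup>2))"
    by (rule real_sqrt_le_mono)
  then show "L1_norm (transfer_op p u) \<le> sqrt (measure lborel D) * (\<epsilon> * L2_norm_on D u)"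
    using eps_nonneg by (simp add: real_sqrt_mult abs_of_nonneg[OF L2_norm_nonneg] abs_of_nonneg[OF L1_norm_nonneg])
qed

lemma in_B_transfer_op_p:
  assumes u: "in_B D u"
  shows "in_B D (transfer_op p u)" and "L1w_norm 2 (transfer_op p u) \<le> VD * L1_norm (transfer_op p u)"
proof -
  have [measurable]: "u \<in> borel_measurable borel" using in_B_measurable[OF u] .
  have [measurable]: "transfer_op p u \<in> borel_measurable borel"
    using transfer_op_measurable[OF p_measurable, of u] by simp
  have pointwise: "lyap y * \<bar>transfer_op p u y\<bar> \<le> VD * \<bar>transfer_op p u y\<bar>" for y
    by (cases "y \<in> D") (auto simp: transfer_op_p_outside VD intro!: mult_right_mono)
  have int_VD: "integrable lborel (\<lambda>y. VD * \<bar>transfer_op p u y\<bar>)"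
    using L1_norm_transfer_op_p_le(1)[OF u] by simp
  have "integrable lborel (\<lambda>y. rho 2 y * transfer_op p u y)"
    by (rule Bochner_Integration.integrable_bound[OF int_VD])
      (use pointwise VD in \<open>auto intro!: AE_I2 simp: rho_2_eq_lyap abs_mult abs_of_pos[OF lyap_pos]\<close>)
  then show B: "in_B D (transfer_op p u)"
    using transfer_op_p_square(1)[OF u] by (simp add: in_B_def indicator_mult_transfer_op_p)
  have "L1w_norm 2 (transfer_op p u) \<le> (\<integral>y. VD * \<bar>transfer_op p u y\<bar> \<partial>lborel)"
    unfolding L1w_norm_2_eq using int_VD in_B_integrable_lyap[OF B]
    by (intro integral_mono pointwise) auto
  then show "L1w_norm 2 (transfer_op p u) \<le> VD * L1_norm (transfer_op p u)"
    by (simp add: L1_norm_def)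
qed

end

section \<open>The uniform Lasota--Yorke inequality\<close>

definition integral_preserving :: "('a::euclidean_space \<Rightarrow> 'a \<Rightarrow> real) \<Rightarrow> bool" where
  "integral_preserving k \<longleftrightarrow> (\<forall>g. integrable lborel g \<longrightarrow> integrable lborel (transfer_op k g) \<longrightarrow>
     (\<integral>y. transfer_op k g y \<partial>lborel) = (\<integral>x. g x \<partial>lborel))"

definition lasota_yorke :: "'a::euclidean_space set \<Rightarrow> ('a \<Rightarrow> 'a \<Rightarrow> real) \<Rightarrow> real \<Rightarrow> real \<Rightarrow> real \<Rightarrow> bool" where
  "lasota_yorke D k A B lam \<longleftrightarrow> (\<forall>n f. in_B D f \<longrightarrow> in_B D ((transfer_op k ^^ n) f) \<and>
     s_norm D ((transfer_op k ^^ n) f) \<le> A * lam ^ n * s_norm D f + B * L1_norm f)"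

definition mixed_norm :: "real \<Rightarrow> real \<Rightarrow> 'a::euclidean_space set \<Rightarrow> ('a \<Rightarrow> real) \<Rightarrow> real" where
  "mixed_norm \<beta> \<tau> D g = L1_norm g + \<beta> * L1w_norm 2 g + \<tau> * L2_norm_on D g"

lemma mixed_norm_nonneg: "0 \<le> \<beta> \<Longrightarrow> 0 \<le> \<tau> \<Longrightarrow> 0 \<le> mixed_norm \<beta> \<tau> D g"
  unfolding mixed_norm_def
  using L1_norm_nonneg[of g] L1w_norm_nonneg[of g] L2_norm_nonneg[of "\<lambda>x. indicator D x * g x"] by simp

lemma s_norm_le_mixed_norm:
  assumes "0 < \<beta>" "0 < \<tau>"
  shows "s_norm D u \<le> (1 / \<beta> + 1 / \<tau>) * mixed_norm \<beta> \<tau> D u"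
proof -
  have "L1w_norm 2 u \<le> (1 / \<beta>) * mixed_norm \<beta> \<tau> D u"
    using assms L1_norm_nonneg[of u] L2_norm_nonneg[of "\<lambda>x. indicator D x * u x"]
    by (simp add: mixed_norm_def field_simps)
  moreover have "L2_norm_on D u \<le> (1 / \<tau>) * mixed_norm \<beta> \<tau> D u"
    using assms L1_norm_nonneg[of u] L1w_norm_nonneg[of u]
    by (simp add: mixed_norm_def field_simps)
  ultimately show ?thesis by (simp add: s_norm_def distrib_right)
qed

lemma mixed_norm_le_s_norm:
  assumes "in_B D u" "0 \<le> \<beta>" "0 \<le> \<tau>"
  shows "mixed_norm \<beta> \<tau> D u \<le> (1 + \<beta> + \<tau>) * s_norm D u"
  using norms_le_s_norm[OF assms(1)] mult_left_mono[OF norms_le_s_norm(2)[OF assms(1)] assms(2)]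
    mult_left_mono[OF norms_le_s_norm(3)[OF assms(1)] assms(3)]
  by (simp add: mixed_norm_def algebra_simps)

lemma contraction_coefficient_L1:
  fixes e Cd C0 sD :: real
  assumes "e > 0" "Cd \<ge> 0" "C0 \<ge> 0" "sD > 0"
  shows "1 - e + (3 * e / (4 * (Cd + 1))) * Cd + (e / (8 * (C0 + 1) * sD)) * (C0 * sD) \<le> 1 - e / 8"
proof -
  have "(3 * e / (4 * (Cd + 1))) * Cd = (3 * e / 4) * (Cd / (Cd + 1))" using assms by simp
  also have "\<dots> \<le> (3 * e / 4) * 1" using assms by (intro mult_left_mono) auto
  finally have 1: "(3 * e / (4 * (Cd + 1))) * Cd \<le> 3 * e / 4" by simp
  have "(e / (8 * c * s)) * (C0 * s) = (e / 8) * (C0 / c)" if "c \<noteq> 0" "s \<noteq> 0" for c s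
    using that by (simp add: field_simps)
  then have "(e / (8 * (C0 + 1) * sD)) * (C0 * sD) = (e / 8) * (C0 / (C0 + 1))"
    using assms by simp
  also have "\<dots> \<le> (e / 8) * 1" using assms by (intro mult_left_mono) auto
  finally have 2: "(e / (8 * (C0 + 1) * sD)) * (C0 * sD) \<le> e / 8" by simp
  from 1 2 show ?thesis by linarith
qed

lemma contraction_coefficient_weighted:
  fixes e c \<gamma> :: real
  assumes "c \<noteq> 0" "\<gamma> \<noteq> 1"
  shows "2 * e / (c / (1 - \<gamma>)) + (3 * e / c) * \<gamma> = (3 * e / c) * ((2 + \<gamma>) / 3)"
  using assms by (simp add: field_simps)

text \<open>The constant \<open>e\<close> is the Doeblin constant for the sublevel set \<open>{lyap \<le> 4 (Cd + 1) / (1 - \<gamma>)}\<close>.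
  The weights \<open>\<beta>\<close> and \<open>\<tau>\<close> of the mixed norm and the admissible Hilbert--Schmidt size \<open>\<epsilon>0\<close>
  of the perturbation are tuned so that the perturbed operator contracts the mixed norm by \<open>\<alpha>\<close> on
  zero-mean densities.\<close>

locale harris_drift_kernel = drift_kernel +
  fixes VD e :: real
  assumes VD: "1 \<le> VD" "\<And>y. y \<in> D \<Longrightarrow> lyap y \<le> VD"
    and e_pos: "0 < e"
    and harris: "\<And>g. in_B D g \<Longrightarrow> (\<integral>x. g x \<partial>lborel) = 0 \<Longrightarrow>
       L1_norm (transfer_op \<kappa> g) \<le> (1 - e) * L1_norm g + 2 * e / (4 * (Cd + 1) / (1 - \<gamma>)) * L1w_norm 2 g"
begin

definition "sD = sqrt (measure lborel D)"
definition "\<beta> = 3 * e / (4 * (Cd + 1))"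
definition "\<tau> = e / (8 * (C0 + 1) * sD)"
definition "\<alpha> = max (1 - e / 8) (max ((2 + \<gamma>) / 3) (1 / 2))"
definition "\<epsilon>0 = min 1 (\<tau> / (2 * (sD + \<beta> * (VD * sD) + \<tau>)))"
definition "one_step_growth = \<gamma> + Cd + VD * sD + C0 * sD + 1"
definition "orbit_bound = s_norm D (uniform_density D)
   + (1 / \<beta> + 1 / \<tau>) * (1 + \<beta> + \<tau>) * (one_step_growth + 1) * s_norm D (uniform_density D) / (1 - \<alpha>)"
definition "ly_A = (1 / \<beta> + 1 / \<tau>) * (1 + \<beta> + \<tau>)"
definition "ly_B = ly_A * s_norm D (uniform_density D) + orbit_bound + 1"

lemma sD_pos: "0 < sD" using measure_D_pos by (simp add: sD_def)
lemma \<beta>_pos: "0 < \<beta>" using e_pos drift_const by (simp add: \<beta>_def)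
lemma \<tau>_pos: "0 < \<tau>" using e_pos C0_nonneg sD_pos by (simp add: \<tau>_def)
lemma \<alpha>_nonneg: "0 \<le> \<alpha>" by (simp add: \<alpha>_def le_max_iff_disj)
lemma \<alpha>_less_1: "\<alpha> < 1" using e_pos drift_rate by (simp add: \<alpha>_def)
lemma \<alpha>_ge: "1 - e / 8 \<le> \<alpha>" "(2 + \<gamma>) / 3 \<le> \<alpha>" "1 / 2 \<le> \<alpha>"
  unfolding \<alpha>_def by (rule max.cobounded1, rule max.coboundedI2, rule max.cobounded1,
    rule max.coboundedI2, rule max.cobounded2)

lemma \<epsilon>0: "0 < \<epsilon>0" "\<epsilon>0 \<le> 1" "\<epsilon>0 * (sD + \<beta> * (VD * sD) + \<tau>) \<le> \<tau> / 2"
proof -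
  define X where "X = sD + \<beta> * (VD * sD) + \<tau>"
  have X: "0 < X"
    using sD_pos \<beta>_pos \<tau>_pos VD by (simp add: X_def add_pos_nonneg)
  show "0 < \<epsilon>0" "\<epsilon>0 \<le> 1" using X \<tau>_pos by (simp_all add: \<epsilon>0_def flip: X_def)
  have "\<epsilon>0 * X \<le> \<tau> / (2 * X) * X"
    using X by (intro mult_right_mono) (auto simp: \<epsilon>0_def X_def)
  also have "\<dots> = \<tau> / 2" using X by simp
  finally show "\<epsilon>0 * (sD + \<beta> * (VD * sD) + \<tau>) \<le> \<tau> / 2" by (simp add: X_def)
qed

lemma ly_constants_pos: "0 < ly_A" "0 < ly_B"
proof -
  have "0 < 1 / \<beta> + 1 / \<tau>" "0 < 1 + \<beta> + \<tau>" using \<beta>_pos \<tau>_pos by (simp_all add: add_pos_pos)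
  then show A: "0 < ly_A" by (simp add: ly_A_def)
  have "0 \<le> one_step_growth" using drift_rate drift_const VD sD_pos C0_nonneg by (simp add: one_step_growth_def)
  then have "0 \<le> orbit_bound"
    unfolding orbit_bound_def using \<open>0 < 1 / \<beta> + 1 / \<tau>\<close> \<open>0 < 1 + \<beta> + \<tau>\<close> \<alpha>_less_1 s_norm_nonneg
      less_imp_le[OF \<beta>_pos] less_imp_le[OF \<tau>_pos]
    by (intro add_nonneg_nonneg divide_nonneg_nonneg mult_nonneg_nonneg) auto
  moreover have "0 \<le> ly_A * s_norm D (uniform_density D)" by (intro mult_nonneg_nonneg less_imp_le[OF A] s_norm_nonneg)
  ultimately show "0 < ly_B" by (simp add: ly_B_def)
qed

end

locale ly_perturbation = harris_drift_kernel +
  fixes p :: "'a \<Rightarrow> 'a \<Rightarrow> real"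
  assumes p_small: "small_HS_kernel D \<epsilon>0 p"
    and preserving: "integral_preserving (\<lambda>x y. \<kappa> x y + p x y)"

sublocale ly_perturbation \<subseteq> P: small_kernel D p \<epsilon>0 VD
  using compact_D p_small \<epsilon>0(1) VD by unfold_locales auto

context ly_perturbation
begin

abbreviation "L \<equiv> transfer_op (\<lambda>x y. \<kappa> x y + p x y)"

lemma kernel_measurable_sum: "kernel_measurable (\<lambda>x y. \<kappa> x y + p x y)"
  by (rule kernel_measurable_add[OF measurable_kernel P.p_measurable])

lemma L_eq_AE:
  assumes u: "in_B D u" shows "AE y in lborel. L u y = transfer_op \<kappa> u y + 1 * transfer_op p u y"
  using P.AE_integrable_p_mult[OF u]
proof eventually_elim
  case (elim y)
  have "L u y = (\<integral>x. \<kappa> x y * u x + p x y * u x \<partial>lborel)"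
    unfolding transfer_op_def by (simp add: algebra_simps)
  also have "\<dots> = transfer_op \<kappa> u y + transfer_op p u y"
    using integrable_kernel_mult[OF u] elim by (simp add: transfer_op_def)
  finally show ?case by simp
qed

lemma L_bounds:
  assumes u: "in_B D u"
  shows "in_B D (L u)"
    and "L1_norm (L u) \<le> L1_norm (transfer_op \<kappa> u) + L1_norm (transfer_op p u)"
    and "L1w_norm 2 (L u) \<le> L1w_norm 2 (transfer_op \<kappa> u) + L1w_norm 2 (transfer_op p u)"
    and "L2_norm_on D (L u) \<le> L2_norm_on D (transfer_op \<kappa> u) + L2_norm_on D (transfer_op p u)"
    and "(\<integral>y. L u y \<partial>lborel) = (\<integral>x. u x \<partial>lborel)"
proof -
  note sum = in_B_add_scaled[OF D_sets in_B_transfer_op[OF u] P.in_B_transfer_op_p(1)[OF u], of 1]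
  have [measurable]: "u \<in> borel_measurable borel" using in_B_measurable[OF u] .
  have "L u \<in> borel_measurable borel" using transfer_op_measurable[OF kernel_measurable_sum, of u] by simp
  note eq = in_B_cong_AE[OF D_sets sum(1) this L_eq_AE[OF u]]
  show B: "in_B D (L u)" by (rule eq(1))
  show "L1_norm (L u) \<le> L1_norm (transfer_op \<kappa> u) + L1_norm (transfer_op p u)"
    using eq(2) sum(2) by simp
  show "L1w_norm 2 (L u) \<le> L1w_norm 2 (transfer_op \<kappa> u) + L1w_norm 2 (transfer_op p u)"
    using eq(3) sum(3) by simp
  show "L2_norm_on D (L u) \<le> L2_norm_on D (transfer_op \<kappa> u) + L2_norm_on D (transfer_op p u)"
    using eq(4) sum(4) by simp
  show "(\<integral>y. L u y \<partial>lborel) = (\<integral>x. u x \<partial>lborel)"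
    using preserving in_B_integrable[OF u] in_B_integrable[OF B] by (simp add: integral_preserving_def)
qed

lemma L_add_scaled_AE:
  assumes u: "in_B D u" and v: "in_B D v"
  shows "AE y in lborel. L (\<lambda>x. u x + c * v x) y = L u y + c * L v y"
  using P.AE_integrable_p_mult[OF u] P.AE_integrable_p_mult[OF v]
proof eventually_elim
  case (elim y)
  have "integrable lborel (\<lambda>x. (\<kappa> x y + p x y) * u x)" "integrable lborel (\<lambda>x. (\<kappa> x y + p x y) * v x)"
    using integrable_kernel_mult[OF u] integrable_kernel_mult[OF v] elim by (simp_all add: distrib_right)
  moreover have "L (\<lambda>x. u x + c * v x) y = (\<integral>x. (\<kappa> x y + p x y) * u x + c * ((\<kappa> x y + p x y) * v x) \<partial>lborel)"
    unfolding transfer_op_def by (simp add: algebra_simps)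
  ultimately show ?case by (simp add: transfer_op_def)
qed

lemma L_cong_AE:
  assumes [measurable]: "u \<in> borel_measurable borel" "v \<in> borel_measurable borel"
    and "AE x in lborel. u x = v x"
  shows "L u = L v"
  unfolding transfer_op_def using assms(3) by (intro ext integral_cong_AE) auto

lemma in_B_L_iterate: "in_B D u \<Longrightarrow> in_B D ((L ^^ n) u)"
  by (induction n) (auto intro: L_bounds(1))

lemma integral_L_iterate: "in_B D u \<Longrightarrow> (\<integral>y. (L ^^ n) u y \<partial>lborel) = (\<integral>x. u x \<partial>lborel)"
  by (induction n) (auto simp: L_bounds(5) in_B_L_iterate)

lemma L_iterate_add_scaled_AE:
  assumes u: "in_B D u" and v: "in_B D v"
  shows "AE y in lborel. (L ^^ n) (\<lambda>x. u x + c * v x) y = (L ^^ n) u y + c * (L ^^ n) v y"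
proof (induction n)
  case (Suc n)
  have "in_B D (\<lambda>x. u x + c * v x)" using in_B_add_scaled(1)[OF D_sets u v] .
  then have "L ((L ^^ n) (\<lambda>x. u x + c * v x)) = L (\<lambda>x. (L ^^ n) u x + c * (L ^^ n) v x)"
    using Suc in_B_measurable[OF in_B_L_iterate]
      in_B_measurable[OF in_B_add_scaled(1)[OF D_sets in_B_L_iterate[OF u] in_B_L_iterate[OF v]]]
    by (intro L_cong_AE) auto
  then show ?case using L_add_scaled_AE[OF in_B_L_iterate[OF u] in_B_L_iterate[OF v], of n c] by simp
qed simp

lemma norms_L_le:
  assumes u: "in_B D u"
  shows "L1_norm (L u) \<le> L1_norm (transfer_op \<kappa> u) + sD * \<epsilon>0 * L2_norm_on D u"
    and "L1w_norm 2 (L u) \<le> \<gamma> * L1w_norm 2 u + Cd * L1_norm u + VD * sD * \<epsilon>0 * L2_norm_on D u"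
    and "L2_norm_on D (L u) \<le> C0 * sD * L1_norm u + \<epsilon>0 * L2_norm_on D u"
proof -
  note P_L1 = P.L1_norm_transfer_op_p_le(2)[OF u, folded sD_def]
  show "L1_norm (L u) \<le> L1_norm (transfer_op \<kappa> u) + sD * \<epsilon>0 * L2_norm_on D u"
    using L_bounds(2)[OF u] P_L1 by (simp add: mult.assoc)
  have "VD * L1_norm (transfer_op p u) \<le> VD * (sD * (\<epsilon>0 * L2_norm_on D u))"
    using VD P_L1 by (intro mult_left_mono) auto
  then show "L1w_norm 2 (L u) \<le> \<gamma> * L1w_norm 2 u + Cd * L1_norm u + VD * sD * \<epsilon>0 * L2_norm_on D u"
    using L_bounds(3)[OF u] L1w_norm_transfer_op_le[OF u] P.in_B_transfer_op_p(2)[OF u]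
    by (simp add: mult.assoc)
  show "L2_norm_on D (L u) \<le> C0 * sD * L1_norm u + \<epsilon>0 * L2_norm_on D u"
    using L_bounds(4)[OF u] L2_norm_on_transfer_op_le[OF u, folded sD_def]
      P.L2_norm_on_transfer_op_p_le[OF u] by simp
qed

abbreviation "N \<equiv> mixed_norm \<beta> \<tau> D"

text \<open>Coefficientwise: the \<open>L\<^sup>1\<close> part loses \<open>e\<close> by the Doeblin bound and regains at most
  \<open>7 e / 8\<close> from the other two norms, the weighted part contracts by the drift, and the
  \<open>L\<^sup>2\<close> part sees only the small perturbation.\<close>

lemma mixed_norm_L_le:
  assumes g: "in_B D g" and g0: "(\<integral>x. g x \<partial>lborel) = 0"
  shows "N (L g) \<le> \<alpha> * N g"
proof -
  define a w q where "a = L1_norm g" and "w = L1w_norm 2 g" and "q = L2_norm_on D g"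
  have nonneg: "a \<ge> 0" "w \<ge> 0" "q \<ge> 0"
    by (auto simp: a_def w_def q_def L1_norm_nonneg L1w_norm_nonneg L2_norm_nonneg)
  note bounds = norms_L_le[OF g, folded a_def w_def q_def]
  have "N (L g) \<le> ((1 - e) * a + 2 * e / (4 * (Cd + 1) / (1 - \<gamma>)) * w + sD * \<epsilon>0 * q)
       + \<beta> * (\<gamma> * w + Cd * a + VD * sD * \<epsilon>0 * q) + \<tau> * (C0 * sD * a + \<epsilon>0 * q)"
    unfolding mixed_norm_def using bounds(1) harris[OF g g0, folded a_def w_def]
      mult_left_mono[OF bounds(2) less_imp_le[OF \<beta>_pos]] mult_left_mono[OF bounds(3) less_imp_le[OF \<tau>_pos]]
    by linarith
  also have "\<dots> = (1 - e + \<beta> * Cd + \<tau> * (C0 * sD)) * a + (2 * e / (4 * (Cd + 1) / (1 - \<gamma>)) + \<beta> * \<gamma>) * w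
      + (\<epsilon>0 * (sD + \<beta> * (VD * sD) + \<tau>)) * q"
    by (simp add: algebra_simps)
  also have "\<dots> \<le> \<alpha> * a + (\<alpha> * \<beta>) * w + (\<alpha> * \<tau>) * q"
  proof -
    have "1 - e + \<beta> * Cd + \<tau> * (C0 * sD) \<le> \<alpha>"
      using contraction_coefficient_L1[OF e_pos drift_const C0_nonneg sD_pos] \<alpha>_ge(1)
      unfolding \<beta>_def \<tau>_def by linarith
    moreover have "2 * e / (4 * (Cd + 1) / (1 - \<gamma>)) + \<beta> * \<gamma> \<le> \<alpha> * \<beta>"
    proof -
      have eq: "2 * e / (4 * (Cd + 1) / (1 - \<gamma>)) + \<beta> * \<gamma> = \<beta> * ((2 + \<gamma>) / 3)"
        using contraction_coefficient_weighted[of "4 * (Cd + 1)" \<gamma> e] drift_const drift_rate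
        by (simp add: \<beta>_def)
      show ?thesis unfolding eq mult.commute[of \<alpha>]
        by (rule mult_left_mono[OF \<alpha>_ge(2) less_imp_le[OF \<beta>_pos]])
    qed
    moreover have "\<epsilon>0 * (sD + \<beta> * (VD * sD) + \<tau>) \<le> \<alpha> * \<tau>"
      using \<epsilon>0(3) mult_right_mono[OF \<alpha>_ge(3) less_imp_le[OF \<tau>_pos]] by linarith
    ultimately show ?thesis
      using nonneg by (intro add_mono mult_right_mono) auto
  qed
  also have "\<dots> = \<alpha> * N g" by (simp add: mixed_norm_def a_def w_def q_def algebra_simps)
  finally show ?thesis .
qed

lemma mixed_norm_L_iterate_le:
  assumes g: "in_B D g" and g0: "(\<integral>x. g x \<partial>lborel) = 0"
  shows "N ((L ^^ n) g) \<le> \<alpha> ^ n * N g"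
proof (induction n)
  case (Suc n)
  have "N ((L ^^ Suc n) g) \<le> \<alpha> * N ((L ^^ n) g)"
    using mixed_norm_L_le[OF in_B_L_iterate[OF g]] integral_L_iterate[OF g] g0 by simp
  also have "\<dots> \<le> \<alpha> * (\<alpha> ^ n * N g)" using Suc \<alpha>_nonneg by (intro mult_left_mono) auto
  finally show ?case by simp
qed simp

lemma s_norm_L_iterate_zero_mean:
  assumes g: "in_B D g" and g0: "(\<integral>x. g x \<partial>lborel) = 0"
  shows "s_norm D ((L ^^ n) g) \<le> (1 / \<beta> + 1 / \<tau>) * (\<alpha> ^ n * N g)"
  using s_norm_le_mixed_norm[OF \<beta>_pos \<tau>_pos, of D "(L ^^ n) g"]
    mult_left_mono[OF mixed_norm_L_iterate_le[OF g g0, of n], of "1 / \<beta> + 1 / \<tau>"] \<beta>_pos \<tau>_pos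
  by simp

lemma s_norm_L_le:
  assumes u: "in_B D u" shows "s_norm D (L u) \<le> one_step_growth * s_norm D u"
proof -
  note s = norms_le_s_norm[OF u]
  have \<epsilon>0_q: "\<epsilon>0 * L2_norm_on D u \<le> s_norm D u"
    using \<epsilon>0(1,2) s(3) L2_norm_nonneg[of "\<lambda>x. indicator D x * u x"] mult_mono[of \<epsilon>0 1] by fastforce
  have "\<gamma> * L1w_norm 2 u \<le> \<gamma> * s_norm D u" using s drift_rate by (intro mult_left_mono) auto
  moreover have "Cd * L1_norm u \<le> Cd * s_norm D u" using s drift_const by (intro mult_left_mono) auto
  moreover have "VD * sD * (\<epsilon>0 * L2_norm_on D u) \<le> VD * sD * s_norm D u"
    using \<epsilon>0_q VD sD_pos by (intro mult_left_mono) auto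
  moreover have "C0 * sD * L1_norm u \<le> C0 * sD * s_norm D u"
    using s C0_nonneg sD_pos by (intro mult_left_mono) auto
  ultimately show ?thesis
    using norms_L_le(2,3)[OF u] \<epsilon>0_q by (simp add: s_norm_def one_step_growth_def algebra_simps)
qed

lemma s_norm_L_iterate_add_scaled_le:
  assumes u: "in_B D u" and v: "in_B D v"
  shows "s_norm D ((L ^^ n) (\<lambda>x. u x + c * v x)) \<le> s_norm D ((L ^^ n) u) + \<bar>c\<bar> * s_norm D ((L ^^ n) v)"
proof -
  have "s_norm D ((L ^^ n) (\<lambda>x. u x + c * v x)) = s_norm D (\<lambda>x. (L ^^ n) u x + c * (L ^^ n) v x)"
    using in_B_cong_AE(5)[OF D_sets in_B_add_scaled(1)[OF D_sets in_B_L_iterate[OF u] in_B_L_iterate[OF v]]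
        in_B_measurable[OF in_B_L_iterate[OF in_B_add_scaled(1)[OF D_sets u v]]]
        L_iterate_add_scaled_AE[OF u v, of n c]] .
  also have "\<dots> \<le> s_norm D ((L ^^ n) u) + \<bar>c\<bar> * s_norm D ((L ^^ n) v)"
    by (rule in_B_add_scaled(5)[OF D_sets in_B_L_iterate[OF u] in_B_L_iterate[OF v]])
  finally show ?thesis .
qed

text \<open>The orbit of the uniform density stays bounded: \<open>L \<phi> - \<phi>\<close> has mean zero, so its
  iterates decay geometrically, and \<open>L\<^sup>n \<phi>\<close> is \<open>\<phi>\<close> plus the sum of the first \<open>n\<close> of them.\<close>

lemma s_norm_L_iterate_density_le: "s_norm D ((L ^^ n) (uniform_density D)) \<le> orbit_bound"
proof -
  define \<phi> where "\<phi> = uniform_density D"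
  note \<phi> = uniform_density[OF compact_D measure_D_pos, folded \<phi>_def]
  define h where "h = (\<lambda>x. L \<phi> x + (-1) * \<phi> x)"
  have h: "in_B D h" unfolding h_def by (rule in_B_add_scaled(1)[OF D_sets L_bounds(1)[OF \<phi>(1)] \<phi>(1)])
  have h0: "(\<integral>x. h x \<partial>lborel) = 0"
    unfolding h_def using in_B_add_scaled(6)[OF D_sets L_bounds(1)[OF \<phi>(1)] \<phi>(1), of "-1"]
      L_bounds(5)[OF \<phi>(1)] by simp
  have L\<phi>: "L \<phi> = (\<lambda>x. \<phi> x + 1 * h x)" by (auto simp: h_def)
  have Nh: "N h \<le> (1 + \<beta> + \<tau>) * ((one_step_growth + 1) * s_norm D \<phi>)"
  proof -
    have "s_norm D h \<le> (one_step_growth + 1) * s_norm D \<phi>"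
      using in_B_add_scaled(5)[OF D_sets L_bounds(1)[OF \<phi>(1)] \<phi>(1), of "-1"] s_norm_L_le[OF \<phi>(1)]
      by (simp add: h_def distrib_right)
    then have "(1 + \<beta> + \<tau>) * s_norm D h \<le> (1 + \<beta> + \<tau>) * ((one_step_growth + 1) * s_norm D \<phi>)"
      using \<beta>_pos \<tau>_pos by (intro mult_left_mono) auto
    then show ?thesis
      using mixed_norm_le_s_norm[OF h less_imp_le[OF \<beta>_pos] less_imp_le[OF \<tau>_pos]] by linarith
  qed
  define c where "c = 1 / \<beta> + 1 / \<tau>"
  have geometric: "(\<Sum>k<n. \<alpha> ^ k) \<le> 1 / (1 - \<alpha>)" for n
    using \<alpha>_nonneg \<alpha>_less_1 by (simp add: sum_gp_strict divide_right_mono)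
  have "s_norm D ((L ^^ n) \<phi>) \<le> s_norm D \<phi> + c * N h * (\<Sum>k<n. \<alpha> ^ k)"
  proof (induction n)
    case (Suc n)
    have "s_norm D ((L ^^ Suc n) \<phi>) = s_norm D ((L ^^ n) (\<lambda>x. \<phi> x + 1 * h x))"
      by (simp only: funpow_Suc_right comp_def L\<phi>)
    also have "\<dots> \<le> s_norm D ((L ^^ n) \<phi>) + s_norm D ((L ^^ n) h)"
      using s_norm_L_iterate_add_scaled_le[OF \<phi>(1) h, of n 1] by simp
    finally show ?case
      using Suc s_norm_L_iterate_zero_mean[OF h h0, of n, folded c_def] by (simp add: algebra_simps)
  qed simp
  also have "\<dots> \<le> s_norm D \<phi> + c * ((1 + \<beta> + \<tau>) * ((one_step_growth + 1) * s_norm D \<phi>)) * (1 / (1 - \<alpha>))"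
    unfolding c_def using \<beta>_pos \<tau>_pos \<alpha>_less_1 geometric[of n] Nh mixed_norm_nonneg[of \<beta> \<tau> D h]
      sum_nonneg[of "{..<n}" "\<lambda>k. \<alpha> ^ k"] \<alpha>_nonneg
    by (intro add_left_mono mult_mono mult_left_mono) (auto simp: sum_nonneg)
  finally show ?thesis by (simp add: orbit_bound_def \<phi>_def c_def mult_ac)
qed

lemma lasota_yorke_L: "lasota_yorke D (\<lambda>x y. \<kappa> x y + p x y) ly_A ly_B \<alpha>"
  unfolding lasota_yorke_def
proof (intro allI impI conjI)
  fix n f assume f: "in_B D f"
  show "in_B D ((L ^^ n) f)" by (rule in_B_L_iterate[OF f])
  define \<phi> where "\<phi> = uniform_density D"
  note \<phi> = uniform_density[OF compact_D measure_D_pos, folded \<phi>_def]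
  define m where "m = (\<integral>x. f x \<partial>lborel)"
  have m: "\<bar>m\<bar> \<le> L1_norm f" unfolding m_def L1_norm_def by (rule integral_abs_bound)
  define g where "g = (\<lambda>x. f x + (-m) * \<phi> x)"
  have g: "in_B D g" unfolding g_def by (rule in_B_add_scaled(1)[OF D_sets f \<phi>(1)])
  have g0: "(\<integral>x. g x \<partial>lborel) = 0"
    unfolding g_def using in_B_add_scaled(6)[OF D_sets f \<phi>(1), of "-m"] \<phi>(2) by (simp add: m_def)
  have "s_norm D ((L ^^ n) f) \<le> s_norm D ((L ^^ n) g) + \<bar>m\<bar> * s_norm D ((L ^^ n) \<phi>)"
    using s_norm_L_iterate_add_scaled_le[OF g \<phi>(1), of n m] by (simp add: g_def)
  also have "s_norm D ((L ^^ n) g) \<le> ly_A * \<alpha> ^ n * s_norm D f + ly_A * s_norm D \<phi> * \<bar>m\<bar>"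
  proof -
    have "s_norm D g \<le> s_norm D f + \<bar>m\<bar> * s_norm D \<phi>"
      using in_B_add_scaled(5)[OF D_sets f \<phi>(1), of "-m"] by (simp add: g_def)
    then have "(1 + \<beta> + \<tau>) * s_norm D g \<le> (1 + \<beta> + \<tau>) * (s_norm D f + \<bar>m\<bar> * s_norm D \<phi>)"
      using \<beta>_pos \<tau>_pos by (intro mult_left_mono) auto
    then have "N g \<le> (1 + \<beta> + \<tau>) * (s_norm D f + \<bar>m\<bar> * s_norm D \<phi>)"
      using mixed_norm_le_s_norm[OF g less_imp_le[OF \<beta>_pos] less_imp_le[OF \<tau>_pos]] by linarith
    then have "(1 / \<beta> + 1 / \<tau>) * (\<alpha> ^ n * N g)
        \<le> (1 / \<beta> + 1 / \<tau>) * (\<alpha> ^ n * ((1 + \<beta> + \<tau>) * (s_norm D f + \<bar>m\<bar> * s_norm D \<phi>)))"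
      using \<alpha>_nonneg \<beta>_pos \<tau>_pos by (intro mult_left_mono) auto
    then have "s_norm D ((L ^^ n) g) \<le> ly_A * (\<alpha> ^ n * (s_norm D f + \<bar>m\<bar> * s_norm D \<phi>))"
      using s_norm_L_iterate_zero_mean[OF g g0, of n] by (simp add: ly_A_def mult_ac)
    also have "\<dots> \<le> ly_A * (\<alpha> ^ n * s_norm D f + \<bar>m\<bar> * s_norm D \<phi>)"
      using ly_constants_pos(1) \<alpha>_nonneg s_norm_nonneg[of D \<phi>]
        power_le_one[OF \<alpha>_nonneg less_imp_le[OF \<alpha>_less_1], of n]
      by (intro mult_left_mono) (auto simp: distrib_left intro!: mult_left_le_one_le)
    also have "\<dots> = ly_A * \<alpha> ^ n * s_norm D f + ly_A * s_norm D \<phi> * \<bar>m\<bar>"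
      by (simp add: algebra_simps)
    finally show ?thesis .
  qed
  also have "\<bar>m\<bar> * s_norm D ((L ^^ n) \<phi>) \<le> orbit_bound * \<bar>m\<bar>"
    using s_norm_L_iterate_density_le[of n] by (simp add: \<phi>_def mult.commute mult_left_mono)
  finally have "s_norm D ((L ^^ n) f) \<le> ly_A * \<alpha> ^ n * s_norm D f + (ly_A * s_norm D \<phi> + orbit_bound) * \<bar>m\<bar>"
    by (simp add: algebra_simps)
  also have "\<dots> \<le> ly_A * \<alpha> ^ n * s_norm D f + ly_B * L1_norm f"
    using ly_constants_pos m by (intro add_left_mono mult_mono) (auto simp: ly_B_def \<phi>_def)
  finally show "s_norm D ((L ^^ n) f) \<le> ly_A * \<alpha> ^ n * s_norm D f + ly_B * L1_norm f" .
qed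

end

lemma (in drift_kernel) uniform_lasota_yorke:
  obtains A B \<epsilon>0 lam where "0 < A" "0 < B" "0 < \<epsilon>0" "0 \<le> lam" "lam < 1"
    and "\<And>p. small_HS_kernel D \<epsilon>0 p \<Longrightarrow> integral_preserving (\<lambda>x y. \<kappa> x y + p x y) \<Longrightarrow>
      lasota_yorke D (\<lambda>x y. \<kappa> x y + p x y) A B lam"
proof -
  obtain VD where VD: "1 \<le> VD" "\<And>y. y \<in> D \<Longrightarrow> lyap y \<le> VD"
    using lyap_bounded_on_compact[OF compact_D] by blast
  have "0 < 4 * (Cd + 1) / (1 - \<gamma>)" using drift_const drift_rate by simp
  then obtain e where e: "0 < e" and harris: "\<And>g. in_B D g \<Longrightarrow> (\<integral>x. g x \<partial>lborel) = 0 \<Longrightarrow>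
      L1_norm (transfer_op \<kappa> g) \<le> (1 - e) * L1_norm g + 2 * e / (4 * (Cd + 1) / (1 - \<gamma>)) * L1w_norm 2 g"
    using L1_norm_transfer_op_zero_mean by blast
  interpret H: harris_drift_kernel \<kappa> D C0 \<gamma> Cd VD e
    using VD e harris by unfold_locales auto
  show ?thesis
  proof (rule that[OF H.ly_constants_pos H.\<epsilon>0(1) H.\<alpha>_nonneg H.\<alpha>_less_1])
    fix p assume "small_HS_kernel D H.\<epsilon>0 p" "integral_preserving (\<lambda>x y. \<kappa> x y + p x y)"
    then interpret ly_perturbation \<kappa> D C0 \<gamma> Cd VD e p by unfold_locales
    show "lasota_yorke D (\<lambda>x y. \<kappa> x y + p x y) H.ly_A H.ly_B H.\<alpha>" by (rule lasota_yorke_L)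
  qed
qed

section \<open>Dissipative flows and Gaussian kernels\<close>

lemma flow_norm_square_has_derivative:
  assumes flow: "is_flow b \<theta>" and t: "0 \<le> t"
  shows "((\<lambda>s. \<theta> s x \<bullet> \<theta> s x) has_real_derivative 2 * (\<theta> t x \<bullet> b (\<theta> t x))) (at t within {0..})"
proof -
  have d: "((\<lambda>s. \<theta> s x) has_derivative (\<lambda>h. h *\<^sub>R b (\<theta> t x))) (at t within {0..})"
    using flow t by (simp add: is_flow_def has_vector_derivative_def)
  show ?thesis
    unfolding has_field_derivative_def
    by (rule has_derivative_eq_rhs[OF has_derivative_inner[OF d d]]) (auto simp: fun_eq_iff inner_commute)
qed

text \<open>Dissipativity makes \<open>exp (2 c\<^sub>2 t) (c\<^sub>2 |\<theta>\<^sub>t x|\<^sup>2 - c\<^sub>1)\<close> nonincreasing in \<open>t\<close>.\<close>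

lemma flow_lyapunov_decreasing:
  fixes b :: "'a::euclidean_space \<Rightarrow> 'a"
  assumes flow: "is_flow b \<theta>" and c2: "c2 > 0" and diss: "\<And>x. inner (b x) x \<le> c1 - c2 * (norm x)\<^sup>2"
  shows "exp (2 * c2) * (c2 * (norm (\<theta> 1 x))\<^sup>2 - c1) \<le> c2 * (norm x)\<^sup>2 - c1"
proof -
  define v where "v t = exp (2 * c2 * t) * (c2 * (\<theta> t x \<bullet> \<theta> t x) - c1)" for t
  define v' where "v' t = 2 * c2 * exp (2 * c2 * t) * (c2 * (\<theta> t x \<bullet> \<theta> t x) - c1 + \<theta> t x \<bullet> b (\<theta> t x))" for t
  have dv: "(v has_real_derivative v' t) (at t within {0..})" if "0 \<le> t" for t
  proof -
    have "((\<lambda>t. exp (2 * c2 * t)) has_real_derivative exp (2 * c2 * t) * (2 * c2)) (at t within {0..})"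
      by (auto intro!: derivative_eq_intros)
    moreover have "((\<lambda>s. c2 * (\<theta> s x \<bullet> \<theta> s x) - c1) has_real_derivative c2 * (2 * (\<theta> t x \<bullet> b (\<theta> t x))))
        (at t within {0..})"
      using DERIV_diff[OF DERIV_cmult[OF flow_norm_square_has_derivative[OF flow that, of x]] DERIV_const]
      by simp
    ultimately have "(v has_real_derivative exp (2 * c2 * t) * (2 * c2) * (c2 * (\<theta> t x \<bullet> \<theta> t x) - c1)
        + c2 * (2 * (\<theta> t x \<bullet> b (\<theta> t x))) * exp (2 * c2 * t)) (at t within {0..})"
      unfolding v_def[abs_def] by (rule DERIV_mult)
    moreover have "exp (2 * c2 * t) * (2 * c2) * (c2 * (\<theta> t x \<bullet> \<theta> t x) - c1)
        + c2 * (2 * (\<theta> t x \<bullet> b (\<theta> t x))) * exp (2 * c2 * t) = v' t"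
      by (simp add: v'_def algebra_simps)
    ultimately show ?thesis by simp
  qed
  have "v 1 \<le> v 0"
  proof (rule DERIV_nonpos_imp_decreasing_open[of 0 1 v])
    fix t :: real assume t: "0 < t" "t < 1"
    have "c2 * (\<theta> t x \<bullet> \<theta> t x) - c1 + \<theta> t x \<bullet> b (\<theta> t x) \<le> 0"
      using diss[of "\<theta> t x"] by (simp add: inner_commute power2_norm_eq_inner)
    moreover have "0 \<le> 2 * c2 * exp (2 * c2 * t)" using c2 by simp
    ultimately have "v' t \<le> 0" unfolding v'_def by (rule mult_nonneg_nonpos[rotated])
    moreover have "(v has_real_derivative v' t) (at t)"
      using dv[of t] t at_within_interior[of t "{0..}"] by simp
    ultimately show "\<exists>y. (v has_real_derivative y) (at t) \<and> y \<le> 0" by blast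
  next
    have "continuous_on {0..} v"
      unfolding continuous_on_eq_continuous_within
    proof
      fix t :: real assume "t \<in> {0..}"
      then show "continuous (at t within {0..}) v" by (intro DERIV_continuous[OF dv]) simp
    qed
    then show "continuous_on {0..1} v" by (rule continuous_on_subset) auto
  qed simp
  then show ?thesis
    using flow by (simp add: v_def is_flow_def power2_norm_eq_inner)
qed

lemma flow_norm_square_le:
  fixes b :: "'a::euclidean_space \<Rightarrow> 'a"
  assumes flow: "is_flow b \<theta>" and c2: "c2 > 0" and diss: "\<And>x. inner (b x) x \<le> c1 - c2 * (norm x)\<^sup>2"
  shows "(norm (\<theta> 1 x))\<^sup>2 \<le> exp (-2 * c2) * (norm x)\<^sup>2 + \<bar>c1\<bar> / c2"
proof -
  note v_decreasing = flow_lyapunov_decreasing[OF flow c2 diss, of x]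
  have "exp (-2 * c2) * exp (2 * c2) = 1" by (simp add: exp_add[symmetric])
  then have "c2 * (norm (\<theta> 1 x))\<^sup>2 - c1 = exp (-2 * c2) * (exp (2 * c2) * (c2 * (norm (\<theta> 1 x))\<^sup>2 - c1))"
    by (simp only: mult.assoc[symmetric] mult_1)
  also have "\<dots> \<le> exp (-2 * c2) * (c2 * (norm x)\<^sup>2 - c1)"
    by (rule mult_left_mono[OF v_decreasing]) simp
  finally have "c2 * (norm (\<theta> 1 x))\<^sup>2 - c1 \<le> exp (-2 * c2) * (c2 * (norm x)\<^sup>2 - c1)" .
  then have "c2 * (norm (\<theta> 1 x))\<^sup>2 \<le> c2 * (exp (-2 * c2) * (norm x)\<^sup>2) + (1 - exp (-2 * c2)) * c1"
    by (simp add: algebra_simps)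
  also have "(1 - exp (-2 * c2)) * c1 \<le> 1 * \<bar>c1\<bar>"
    using c2 by (intro order_trans[OF mult_left_mono[OF abs_ge_self] mult_right_mono]) auto
  finally have "c2 * (norm (\<theta> 1 x))\<^sup>2 \<le> c2 * (exp (-2 * c2) * (norm x)\<^sup>2 + \<bar>c1\<bar> / c2)"
    using c2 by (simp add: distrib_left)
  then show ?thesis using c2 by simp
qed

lemma nn_integral_gaussian_rescale:
  fixes \<theta> :: "'a::euclidean_space" and l :: real
  assumes l: "l > 0"
  shows "(\<integral>\<^sup>+y. ennreal (exp (- (l / 2) * (norm (y - \<theta>))\<^sup>2)) \<partial>lborel)
       = ennreal ((sqrt 2 / l) ^ DIM('a)) * (\<integral>\<^sup>+w. ennreal (exp (- (norm (w - \<theta>))\<^sup>2 / l)) \<partial>lborel)"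
proof -
  define c where "c = sqrt 2 / l"
  have c: "c > 0" using l by (simp add: c_def)
  define t where "t = \<theta> - c *\<^sub>R \<theta>"
  have eq: "lborel = density (distr lborel borel (\<lambda>x. t + c *\<^sub>R x)) (\<lambda>_. ennreal (\<bar>c\<bar> ^ DIM('a)))"
    using lborel_affine[of c t] c by simp
  let ?f = "\<lambda>y::'a. ennreal (exp (- (l / 2) * (norm (y - \<theta>))\<^sup>2))"
  have "(\<integral>\<^sup>+y. ?f y \<partial>lborel) = (\<integral>\<^sup>+y. ?f y \<partial>(density (distr lborel borel (\<lambda>x. t + c *\<^sub>R x)) (\<lambda>_. ennreal (\<bar>c\<bar> ^ DIM('a)))))"
    by (simp only: eq[symmetric])
  also have "\<dots> = (\<integral>\<^sup>+w. ennreal (\<bar>c\<bar> ^ DIM('a)) * ?f (t + c *\<^sub>R w) \<partial>lborel)"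
    by (subst nn_integral_density) (auto simp: nn_integral_distr)
  also have "\<dots> = ennreal (c ^ DIM('a)) * (\<integral>\<^sup>+w. ennreal (exp (- (norm (w - \<theta>))\<^sup>2 / l)) \<partial>lborel)"
  proof -
    have "?f (t + c *\<^sub>R w) = ennreal (exp (- (norm (w - \<theta>))\<^sup>2 / l))" for w
    proof -
      have "t + c *\<^sub>R w - \<theta> = c *\<^sub>R (w - \<theta>)" by (simp add: t_def algebra_simps)
      then have "(norm (t + c *\<^sub>R w - \<theta>))\<^sup>2 = c\<^sup>2 * (norm (w - \<theta>))\<^sup>2" using c by (simp add: power_mult_distrib)
      moreover have "(l / 2) * c\<^sup>2 = 1 / l" using l by (simp add: c_def power_divide power2_eq_square)
      ultimately have "- (l / 2) * (norm (t + c *\<^sub>R w - \<theta>))\<^sup>2 = - (norm (w - \<theta>))\<^sup>2 / l"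
        by (metis (no_types, lifting) divide_inverse mult.assoc mult.left_neutral mult_minus_left mult.commute)
      then show ?thesis by simp
    qed
    then show ?thesis using c by (subst nn_integral_cmult) auto
  qed
  finally show ?thesis by (simp add: c_def)
qed

lemma mult_exp_neg_le:
  fixes s l :: real assumes "s \<ge> 0" "l > 0"
  shows "s * exp (- l * s) \<le> (2 / l) * exp (- (l / 2) * s)"
proof -
  have "1 + (l / 2) * s \<le> exp ((l / 2) * s)" by (rule exp_ge_add_one_self)
  then have "(l / 2) * s \<le> exp ((l / 2) * s)" by linarith
  then have "s \<le> (2 / l) * exp ((l / 2) * s)" using assms by (simp add: field_simps)
  then have "s * exp (- (l / 2) * s) \<le> (2 / l) * exp ((l / 2) * s) * exp (- (l / 2) * s)"
    by (intro mult_right_mono) auto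
  also have "\<dots> = 2 / l" by (simp add: mult.assoc exp_add[symmetric])
  finally have 1: "s * exp (- (l / 2) * s) \<le> 2 / l" .
  have "s * exp (- l * s) = (s * exp (- (l / 2) * s)) * exp (- (l / 2) * s)"
    by (simp add: mult.assoc exp_add[symmetric])
  also have "\<dots> \<le> (2 / l) * exp (- (l / 2) * s)" using 1 by (intro mult_right_mono) auto
  finally show ?thesis .
qed

lemma norm_square_le_weighted:
  fixes y \<theta> :: "'a::euclidean_space" and e :: real assumes e: "e > 0"
  shows "(norm y)\<^sup>2 \<le> (1 + e) * (norm \<theta>)\<^sup>2 + (1 + 1 / e) * (norm (y - \<theta>))\<^sup>2"
proof -
  define p where "p = norm \<theta>"
  define q where "q = norm (y - \<theta>)"
  have "norm y \<le> p + q" unfolding p_def q_def using norm_triangle_ineq[of \<theta> "y - \<theta>"] by simp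
  then have "(norm y)\<^sup>2 \<le> (p + q)\<^sup>2" by (intro power_mono) auto
  also have "\<dots> \<le> (1 + e) * p\<^sup>2 + (1 + 1 / e) * q\<^sup>2"
  proof -
    have "0 \<le> (e * p - q)\<^sup>2 / e" using e by simp
    also have "(e * p - q)\<^sup>2 / e = e * p\<^sup>2 - 2 * p * q + q\<^sup>2 / e" using e
      by (simp add: power2_eq_square field_simps)
    finally have "2 * p * q \<le> e * p\<^sup>2 + q\<^sup>2 / e" by linarith
    then show ?thesis by (simp add: power2_eq_square algebra_simps)
  qed
  finally show ?thesis by (simp add: p_def q_def)
qed

locale gaussian_kernel =
  fixes \<kappa> :: "'a::euclidean_space \<Rightarrow> 'a \<Rightarrow> real" and \<Theta> :: "'a \<Rightarrow> 'a" and l0 C0 :: real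
  assumes mass_one: "\<And>x. (\<integral>\<^sup>+y. ennreal (\<kappa> x y) \<partial>lborel) = 1"
    and lower: "\<And>x y. exp (- (norm (\<Theta> x - y))\<^sup>2 / l0) / C0 \<le> \<kappa> x y"
    and upper: "\<And>x y. \<kappa> x y \<le> C0 * exp (- l0 * (norm (\<Theta> x - y))\<^sup>2)"
    and l0: "0 < l0" "l0 \<le> 1" and C0: "1 \<le> C0"
    and row_measurable [measurable]: "\<And>x. (\<lambda>y. \<kappa> x y) \<in> borel_measurable borel"
begin

lemma nonneg: "0 \<le> \<kappa> x y"
  using lower[of x y] C0 by (smt (verit) divide_nonneg_pos exp_gt_zero)

lemma bounded: "\<kappa> x y \<le> C0"
proof -
  have "C0 * exp (- l0 * (norm (\<Theta> x - y))\<^sup>2) \<le> C0 * 1" using C0 l0 by (intro mult_left_mono) auto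
  then show ?thesis using upper[of x y] by simp
qed

lemma nn_integral_gaussian_le: "(\<integral>\<^sup>+w. ennreal (exp (- (norm (w - \<Theta> x))\<^sup>2 / l0)) \<partial>lborel) \<le> ennreal C0"
proof -
  have "(\<integral>\<^sup>+w. ennreal (exp (- (norm (w - \<Theta> x))\<^sup>2 / l0)) \<partial>lborel) \<le> (\<integral>\<^sup>+w. ennreal C0 * ennreal (\<kappa> x w) \<partial>lborel)"
  proof (intro nn_integral_mono)
    fix w
    have "exp (- (norm (w - \<Theta> x))\<^sup>2 / l0) \<le> C0 * \<kappa> x w"
      using lower[of x w] C0 by (simp add: norm_minus_commute field_simps)
    then show "ennreal (exp (- (norm (w - \<Theta> x))\<^sup>2 / l0)) \<le> ennreal C0 * ennreal (\<kappa> x w)"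
      using C0 nonneg by (simp add: ennreal_mult[symmetric] ennreal_leI)
  qed
  also have "\<dots> = ennreal C0" by (subst nn_integral_cmult) (auto simp: mass_one)
  finally show ?thesis .
qed

definition "second_moment_bound = C0 * (2 / l0) * ((sqrt 2 / l0) ^ DIM('a) * C0)"

lemma second_moment_le:
  "(\<integral>\<^sup>+y. ennreal ((norm (y - \<Theta> x))\<^sup>2 * \<kappa> x y) \<partial>lborel) \<le> ennreal second_moment_bound"
proof -
  have "(\<integral>\<^sup>+y. ennreal ((norm (y - \<Theta> x))\<^sup>2 * \<kappa> x y) \<partial>lborel)
      \<le> (\<integral>\<^sup>+y. ennreal (C0 * (2 / l0)) * ennreal (exp (- (l0 / 2) * (norm (y - \<Theta> x))\<^sup>2)) \<partial>lborel)"
  proof (intro nn_integral_mono)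
    fix y
    have "(norm (y - \<Theta> x))\<^sup>2 * \<kappa> x y \<le> (norm (y - \<Theta> x))\<^sup>2 * (C0 * exp (- l0 * (norm (y - \<Theta> x))\<^sup>2))"
      using upper[of x y] by (intro mult_left_mono) (auto simp: norm_minus_commute)
    also have "\<dots> = C0 * ((norm (y - \<Theta> x))\<^sup>2 * exp (- l0 * (norm (y - \<Theta> x))\<^sup>2))" by simp
    also have "\<dots> \<le> C0 * ((2 / l0) * exp (- (l0 / 2) * (norm (y - \<Theta> x))\<^sup>2))"
      using C0 l0 by (intro mult_left_mono mult_exp_neg_le) auto
    finally show "ennreal ((norm (y - \<Theta> x))\<^sup>2 * \<kappa> x y)
        \<le> ennreal (C0 * (2 / l0)) * ennreal (exp (- (l0 / 2) * (norm (y - \<Theta> x))\<^sup>2))"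
      using C0 l0 by (simp add: ennreal_mult[symmetric] ennreal_leI mult.assoc)
  qed
  also have "\<dots> = ennreal (C0 * (2 / l0)) * (ennreal ((sqrt 2 / l0) ^ DIM('a))
      * (\<integral>\<^sup>+w. ennreal (exp (- (norm (w - \<Theta> x))\<^sup>2 / l0)) \<partial>lborel))"
    using nn_integral_gaussian_rescale[OF l0(1), of "\<Theta> x"] by (subst nn_integral_cmult) auto
  also have "\<dots> \<le> ennreal (C0 * (2 / l0)) * (ennreal ((sqrt 2 / l0) ^ DIM('a)) * ennreal C0)"
    by (intro mult_left_mono nn_integral_gaussian_le) auto
  also have "\<dots> = ennreal second_moment_bound"
    using C0 l0 by (simp add: second_moment_bound_def ennreal_mult[symmetric] mult.assoc)
  finally show ?thesis .
qed

lemma second_moment_bound_nonneg: "0 \<le> second_moment_bound"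
  using C0 l0 by (simp add: second_moment_bound_def)

text \<open>If \<open>\<Theta>\<close> contracts \<open>|x|\<^sup>2\<close> up to a constant, so does the kernel; the error \<open>y - \<Theta> x\<close>
  has bounded second moment and is absorbed by a weighted triangle inequality.\<close>

lemma drift:
  assumes contr: "\<And>x. (norm (\<Theta> x))\<^sup>2 \<le> a * (norm x)\<^sup>2 + c" and a: "0 < a" "a < 1" and c: "0 \<le> c"
  obtains \<gamma> Cd where "0 \<le> \<gamma>" "\<gamma> < 1" "0 \<le> Cd"
    and "\<And>x. (\<integral>\<^sup>+y. ennreal (lyap y * \<kappa> x y) \<partial>lborel) \<le> ennreal (\<gamma> * lyap x + Cd)"
proof -
  define e where "e = (1 - a) / (2 * a)"
  have e: "0 < e" using a by (simp add: e_def)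
  define \<gamma> where "\<gamma> = (1 + a) / 2"
  have \<gamma>: "(1 + e) * a = \<gamma>" using a by (simp add: e_def \<gamma>_def field_simps)
  define Cd where "Cd = 1 + (1 + e) * c + (1 + 1 / e) * second_moment_bound"
  have "(\<integral>\<^sup>+y. ennreal (lyap y * \<kappa> x y) \<partial>lborel) \<le> ennreal (\<gamma> * lyap x + Cd)" for x
  proof -
    have "(\<integral>\<^sup>+y. ennreal (lyap y * \<kappa> x y) \<partial>lborel)
        \<le> (\<integral>\<^sup>+y. ennreal (1 + (1 + e) * (norm (\<Theta> x))\<^sup>2) * ennreal (\<kappa> x y)
              + ennreal (1 + 1 / e) * ennreal ((norm (y - \<Theta> x))\<^sup>2 * \<kappa> x y) \<partial>lborel)"
    proof (intro nn_integral_mono)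
      fix y
      have "lyap y * \<kappa> x y \<le> (1 + (1 + e) * (norm (\<Theta> x))\<^sup>2 + (1 + 1 / e) * (norm (y - \<Theta> x))\<^sup>2) * \<kappa> x y"
        using norm_square_le_weighted[OF e, of y "\<Theta> x"] nonneg[of x y]
        by (intro mult_right_mono) (auto simp: lyap_def)
      then show "ennreal (lyap y * \<kappa> x y) \<le> ennreal (1 + (1 + e) * (norm (\<Theta> x))\<^sup>2) * ennreal (\<kappa> x y)
              + ennreal (1 + 1 / e) * ennreal ((norm (y - \<Theta> x))\<^sup>2 * \<kappa> x y)"
        using e nonneg[of x y]
        by (simp add: algebra_simps ennreal_mult[symmetric] ennreal_plus[symmetric] ennreal_leI del: ennreal_plus)
    qed
    also have "\<dots> = ennreal (1 + (1 + e) * (norm (\<Theta> x))\<^sup>2) * (\<integral>\<^sup>+y. ennreal (\<kappa> x y) \<partial>lborel)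
          + ennreal (1 + 1 / e) * (\<integral>\<^sup>+y. ennreal ((norm (y - \<Theta> x))\<^sup>2 * \<kappa> x y) \<partial>lborel)"
      by (subst nn_integral_add) (auto simp: nn_integral_cmult)
    also have "\<dots> \<le> ennreal (1 + (1 + e) * (norm (\<Theta> x))\<^sup>2) + ennreal (1 + 1 / e) * ennreal second_moment_bound"
      unfolding mass_one by (intro add_mono mult_left_mono second_moment_le) auto
    also have "\<dots> = ennreal (1 + (1 + e) * (norm (\<Theta> x))\<^sup>2 + (1 + 1 / e) * second_moment_bound)"
      using e second_moment_bound_nonneg
      by (simp add: ennreal_mult[symmetric] ennreal_plus[symmetric] del: ennreal_plus)
    also have "\<dots> \<le> ennreal (\<gamma> * lyap x + Cd)"
    proof (intro ennreal_leI)
      have "(1 + e) * (norm (\<Theta> x))\<^sup>2 \<le> (1 + e) * (a * (norm x)\<^sup>2 + c)"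
        using contr[of x] e by (intro mult_left_mono) auto
      also have "\<dots> = ((1 + e) * a) * (norm x)\<^sup>2 + (1 + e) * c" by (simp add: algebra_simps)
      also have "\<dots> = \<gamma> * (norm x)\<^sup>2 + (1 + e) * c" by (simp only: \<gamma>)
      finally have "(1 + e) * (norm (\<Theta> x))\<^sup>2 \<le> \<gamma> * (norm x)\<^sup>2 + (1 + e) * c" .
      moreover have "0 \<le> \<gamma>" using a by (simp add: \<gamma>_def)
      ultimately show "1 + (1 + e) * (norm (\<Theta> x))\<^sup>2 + (1 + 1 / e) * second_moment_bound \<le> \<gamma> * lyap x + Cd"
        by (simp add: lyap_def Cd_def algebra_simps)
    qed
    finally show ?thesis .
  qed
  moreover have "0 \<le> Cd" using e c second_moment_bound_nonneg by (simp add: Cd_def)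
  moreover have "0 \<le> \<gamma>" "\<gamma> < 1" using a by (simp_all add: \<gamma>_def)
  ultimately show ?thesis using that by blast
qed

lemma minorization:
  fixes R :: real
  assumes contr: "\<And>x. (norm (\<Theta> x))\<^sup>2 \<le> (norm x)\<^sup>2 + c" and D: "bounded D"
  shows "\<exists>\<eta>>0. \<forall>x y. lyap x \<le> R \<longrightarrow> y \<in> D \<longrightarrow> \<eta> \<le> \<kappa> x y"
proof -
  obtain B where B: "\<And>y. y \<in> D \<Longrightarrow> norm y \<le> B" using D bounded_iff by blast
  define \<rho> where "\<rho> = sqrt (\<bar>R\<bar> + \<bar>c\<bar>) + \<bar>B\<bar>"
  define \<eta> where "\<eta> = exp (- \<rho>\<^sup>2 / l0) / C0"
  have "\<eta> \<le> \<kappa> x y" if x: "lyap x \<le> R" and y: "y \<in> D" for x y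
  proof -
    have "(norm (\<Theta> x))\<^sup>2 \<le> \<bar>R\<bar> + \<bar>c\<bar>" using contr[of x] x by (simp add: lyap_def)
    then have "norm (\<Theta> x) \<le> sqrt (\<bar>R\<bar> + \<bar>c\<bar>)" by (simp add: real_le_rsqrt)
    then have "norm (\<Theta> x - y) \<le> \<rho>"
      using norm_triangle_ineq4[of "\<Theta> x" y] B[OF y] by (simp add: \<rho>_def)
    then have "(norm (\<Theta> x - y))\<^sup>2 \<le> \<rho>\<^sup>2" by (intro power_mono) auto
    then have "\<eta> \<le> exp (- (norm (\<Theta> x - y))\<^sup>2 / l0) / C0"
      using C0 l0 by (simp add: \<eta>_def divide_right_mono)
    then show ?thesis using lower[of x y] by linarith
  qed
  moreover have "0 < \<eta>" using C0 by (simp add: \<eta>_def)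
  ultimately show ?thesis by blast
qed

end

section \<open>The diffusion kernel and its perturbations\<close>

lemma measure_pos_of_interior:
  fixes D :: "'a::euclidean_space set"
  assumes "compact D" "x \<in> interior D"
  shows "0 < measure lborel D"
proof -
  obtain e where e: "0 < e" "ball x e \<subseteq> D" using assms(2) mem_interior by blast
  have "0 < emeasure lborel (ball x e)" using e by (simp add: emeasure_ball unit_ball_vol_pos)
  also have "\<dots> \<le> emeasure lborel D"
    using e assms(1) by (intro emeasure_mono) (auto simp: borel_compact)
  also have "\<dots> = ennreal (measure lborel D)"
    using emeasure_compact_finite[OF assms(1)] by (simp add: emeasure_eq_ennreal_measure)
  finally show ?thesis by simp
qed

lemma distributed_nn_integral_eq_1:
  assumes "prob_space M" "distributed M lborel X (\<lambda>y. ennreal (f y))"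
  shows "(\<integral>\<^sup>+y. ennreal (f y) \<partial>lborel) = 1"
proof -
  have "emeasure M (X -` UNIV \<inter> space M) = (\<integral>\<^sup>+y. ennreal (f y) * indicator UNIV y \<partial>lborel)"
    by (rule distributed_emeasure[OF assms(2)]) simp
  then show ?thesis using prob_space.emeasure_space_1[OF assms(1)] by simp
qed

lemma drift_kernel_of_gaussian_bounds:
  fixes b :: "'a::euclidean_space \<Rightarrow> 'a"
  assumes flow: "is_flow b \<theta>" and c2: "c2 > 0" and diss: "\<And>x. inner (b x) x \<le> c1 - c2 * (norm x)\<^sup>2"
    and gauss: "gaussian_kernel \<kappa> (\<theta> 1) l0 C0" and measurable: "kernel_measurable \<kappa>"
    and D: "compact D" "0 < measure lborel D"
  obtains \<gamma> Cd where "drift_kernel \<kappa> D C0 \<gamma> Cd"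
proof -
  interpret gaussian_kernel \<kappa> "\<theta> 1" l0 C0 by (rule gauss)
  have contr: "(norm (\<theta> 1 x))\<^sup>2 \<le> exp (-2 * c2) * (norm x)\<^sup>2 + \<bar>c1\<bar> / c2" for x
    by (rule flow_norm_square_le[OF flow c2 diss])
  moreover have "exp (-2 * c2) * (norm x)\<^sup>2 \<le> (norm x)\<^sup>2" for x :: 'a
    using c2 by (intro mult_left_le_one_le) auto
  ultimately have "(norm (\<theta> 1 x))\<^sup>2 \<le> (norm x)\<^sup>2 + \<bar>c1\<bar> / c2" for x
    by (meson add_right_mono order_trans)
  note minor = minorization[OF this compact_imp_bounded[OF D(1)]]
  obtain \<gamma> Cd where "0 \<le> \<gamma>" "\<gamma> < 1" "0 \<le> Cd"
    and "\<And>x. (\<integral>\<^sup>+y. ennreal (lyap y * \<kappa> x y) \<partial>lborel) \<le> ennreal (\<gamma> * lyap x + Cd)"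
    by (rule drift[OF contr]) (use c2 in auto)
  then have "drift_kernel \<kappa> D C0 \<gamma> Cd"
    using measurable nonneg bounded mass_one minor D by unfold_locales auto
  then show ?thesis by (rule that)
qed

lemma nn_integral_square_sum_le:
  assumes [measurable]: "(\<lambda>z. k (fst z) (snd z)) \<in> borel_measurable (lborel \<Otimes>\<^sub>M lborel)"
    "(\<lambda>z. q (fst z) (snd z)) \<in> borel_measurable (lborel \<Otimes>\<^sub>M lborel)"
    and k: "integrable (lborel \<Otimes>\<^sub>M lborel) (\<lambda>z. (k (fst z) (snd z))\<^sup>2)"
    and q: "integrable (lborel \<Otimes>\<^sub>M lborel) (\<lambda>z. (q (fst z) (snd z))\<^sup>2)"
  shows "(\<integral>\<^sup>+z. ennreal ((k (fst z) (snd z) + q (fst z) (snd z))\<^sup>2) \<partial>(lborel \<Otimes>\<^sub>M lborel))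
    \<le> ennreal (2 * (kernel_L2_norm k)\<^sup>2 + 2 * (kernel_L2_norm q)\<^sup>2)"
proof -
  have "(\<integral>\<^sup>+z. ennreal ((k (fst z) (snd z) + q (fst z) (snd z))\<^sup>2) \<partial>(lborel \<Otimes>\<^sub>M lborel))
      \<le> (\<integral>\<^sup>+z. ennreal (2 * (k (fst z) (snd z))\<^sup>2 + 2 * (q (fst z) (snd z))\<^sup>2) \<partial>(lborel \<Otimes>\<^sub>M lborel))"
  proof (intro nn_integral_mono ennreal_leI)
    fix z
    have "0 \<le> (k (fst z) (snd z) - q (fst z) (snd z))\<^sup>2" by simp
    then show "(k (fst z) (snd z) + q (fst z) (snd z))\<^sup>2 \<le> 2 * (k (fst z) (snd z))\<^sup>2 + 2 * (q (fst z) (snd z))\<^sup>2"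
      by (simp add: power2_eq_square algebra_simps)
  qed
  also have "\<dots> = ennreal (\<integral>z. 2 * (k (fst z) (snd z))\<^sup>2 + 2 * (q (fst z) (snd z))\<^sup>2 \<partial>(lborel \<Otimes>\<^sub>M lborel))"
    using k q by (intro nn_integral_eq_integral) auto
  also have "\<dots> = ennreal (2 * (kernel_L2_norm k)\<^sup>2 + 2 * (kernel_L2_norm q)\<^sup>2)"
    using k q by (simp add: kernel_L2_norm_def)
  finally show ?thesis .
qed

lemma small_HS_kernel_eventually:
  fixes \<kappa>' :: "'a::euclidean_space \<Rightarrow> 'a \<Rightarrow> real" and r :: "real \<Rightarrow> 'a \<Rightarrow> 'a \<Rightarrow> real"
  assumes dbar: "\<delta>bar > 0" and \<epsilon>: "0 < \<epsilon>"
    and kdot_meas: "(\<lambda>z. \<kappa>' (fst z) (snd z)) \<in> borel_measurable (lborel \<Otimes>\<^sub>M lborel)"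
    and kdot_supp: "\<forall>x y. (x, y) \<notin> D \<times> D \<longrightarrow> \<kappa>' x y = 0"
    and kdot_L2: "integrable (lborel \<Otimes>\<^sub>M lborel) (\<lambda>z. (\<kappa>' (fst z) (snd z))\<^sup>2)"
    and r_meas: "\<forall>\<delta>\<in>{0..<\<delta>bar}. (\<lambda>z. r \<delta> (fst z) (snd z)) \<in> borel_measurable (lborel \<Otimes>\<^sub>M lborel)"
    and r_supp: "\<forall>\<delta>\<in>{0..<\<delta>bar}. \<forall>x y. (x, y) \<notin> D \<times> D \<longrightarrow> r \<delta> x y = 0"
    and r_L2: "\<forall>\<delta>\<in>{0..<\<delta>bar}. integrable (lborel \<Otimes>\<^sub>M lborel) (\<lambda>z. (r \<delta> (fst z) (snd z))\<^sup>2)"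
    and r0: "\<forall>x y. r 0 x y = 0"
    and r_small: "((\<lambda>\<delta>. kernel_L2_norm (r \<delta>) / \<delta>) \<longlongrightarrow> 0) (at_right 0)"
  obtains \<delta>1 where "0 < \<delta>1" "\<delta>1 \<le> \<delta>bar"
    and "\<And>\<delta>. \<delta> \<in> {0..<\<delta>1} \<Longrightarrow> small_HS_kernel D \<epsilon> (\<lambda>x y. \<delta> * \<kappa>' x y + r \<delta> x y)"
proof -
  have "eventually (\<lambda>\<delta>. kernel_L2_norm (r \<delta>) / \<delta> < 1) (at_right 0)"
    by (rule order_tendstoD(2)[OF r_small]) simp
  then obtain d0 where d0: "0 < d0" "\<And>\<delta>. 0 < \<delta> \<Longrightarrow> \<delta> < d0 \<Longrightarrow> kernel_L2_norm (r \<delta>) / \<delta> < 1"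
    unfolding eventually_at_right_field by auto
  define K where "K = (kernel_L2_norm \<kappa>')\<^sup>2 + 1"
  have K: "0 < K" by (simp add: K_def add_nonneg_pos)
  define \<delta>1 where "\<delta>1 = min \<delta>bar (min d0 (\<epsilon> / sqrt (2 * K)))"
  have "small_HS_kernel D \<epsilon> (\<lambda>x y. \<delta> * \<kappa>' x y + r \<delta> x y)" if \<delta>: "\<delta> \<in> {0..<\<delta>1}" for \<delta>
  proof -
    have \<delta>bar: "\<delta> \<in> {0..<\<delta>bar}" using \<delta> by (auto simp: \<delta>1_def)
    have [measurable]: "(\<lambda>z. r \<delta> (fst z) (snd z)) \<in> borel_measurable (lborel \<Otimes>\<^sub>M lborel)"
      using r_meas \<delta>bar by blast
    have [measurable]: "(\<lambda>z. \<kappa>' (fst z) (snd z)) \<in> borel_measurable (lborel \<Otimes>\<^sub>M lborel)" by (rule kdot_meas)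
    have r_le: "kernel_L2_norm (r \<delta>) \<le> \<delta>"
    proof (cases "\<delta> = 0")
      case True then show ?thesis using r0 by (simp add: kernel_L2_norm_def)
    next
      case False
      then show ?thesis using d0(2)[of \<delta>] \<delta> by (auto simp: \<delta>1_def)
    qed
    have "kernel_L2_norm (\<lambda>x y. \<delta> * \<kappa>' x y) = \<delta> * kernel_L2_norm \<kappa>'"
      using \<delta> by (simp add: kernel_L2_norm_def power_mult_distrib real_sqrt_mult)
    then have "(\<integral>\<^sup>+z. ennreal ((\<delta> * \<kappa>' (fst z) (snd z) + r \<delta> (fst z) (snd z))\<^sup>2) \<partial>(lborel \<Otimes>\<^sub>M lborel))
        \<le> ennreal (2 * (\<delta> * kernel_L2_norm \<kappa>')\<^sup>2 + 2 * (kernel_L2_norm (r \<delta>))\<^sup>2)"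
      using nn_integral_square_sum_le[of "\<lambda>x y. \<delta> * \<kappa>' x y" "r \<delta>"] kdot_L2 r_L2 \<delta>bar
      by (simp add: power_mult_distrib)
    also have "\<dots> \<le> ennreal ((sqrt (2 * K) * \<delta>)\<^sup>2)"
      using r_le kernel_L2_norm_def power_mono[OF r_le, of 2]
      by (intro ennreal_leI) (auto simp: K_def power_mult_distrib algebra_simps kernel_L2_norm_def)
    also have "\<dots> \<le> ennreal (\<epsilon>\<^sup>2)"
    proof (intro ennreal_leI power_mono)
      have "sqrt (2 * K) * \<delta> \<le> sqrt (2 * K) * (\<epsilon> / sqrt (2 * K))"
        using \<delta> K by (intro mult_left_mono) (auto simp: \<delta>1_def)
      then show "sqrt (2 * K) * \<delta> \<le> \<epsilon>" using K by simp
    qed (use \<delta> K in auto)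
    finally show ?thesis
      using kdot_supp r_supp \<delta>bar kdot_meas
      by (auto simp: small_HS_kernel_def kernel_measurable_def)
  qed
  moreover have "0 < \<delta>1" "\<delta>1 \<le> \<delta>bar" using dbar d0 \<epsilon> K by (simp_all add: \<delta>1_def)
  ultimately show ?thesis using that by blast
qed

lemma drift_kernel_of_density:
  fixes b :: "'a::euclidean_space \<Rightarrow> 'a" and X :: "'a \<Rightarrow> real \<Rightarrow> 'p \<Rightarrow> 'a"
  assumes diss: "\<exists>c1 c2. c2 > 0 \<and> (\<forall>x. inner (b x) x \<le> c1 - c2 * (norm x)\<^sup>2)"
    and M: "prob_space M" and flow: "is_flow b \<theta>"
    and dens: "\<forall>x. distributed M lborel (X x 1) (\<lambda>y. ennreal (\<kappa> x y))"
    and kcont: "continuous_on UNIV (\<lambda>z. \<kappa> (fst z) (snd z))"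
    and l0: "0 < l0" "l0 \<le> 1" and C0: "1 \<le> C0"
    and lower: "\<And>x y. exp (- (norm (\<theta> 1 x - y))\<^sup>2 / l0) / C0 \<le> \<kappa> x y"
    and upper: "\<And>x y. \<kappa> x y \<le> C0 * exp (- l0 * (norm (\<theta> 1 x - y))\<^sup>2)"
    and D: "compact D" "0 \<in> interior D"
  obtains \<gamma> Cd where "drift_kernel \<kappa> D C0 \<gamma> Cd"
proof -
  obtain c1 c2 where c2: "c2 > 0" and dis: "\<And>x. inner (b x) x \<le> c1 - c2 * (norm x)\<^sup>2" using diss by blast
  have measurable: "kernel_measurable \<kappa>" by (rule kernel_measurable_continuous[OF kcont])
  have "(\<integral>\<^sup>+y. ennreal (\<kappa> x y) \<partial>lborel) = 1" for x
    using distributed_nn_integral_eq_1 M dens by blast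
  then have "gaussian_kernel \<kappa> (\<theta> 1) l0 C0"
    using l0 C0 lower upper by unfold_locales (auto simp: kernel_measurable_row[OF measurable])
  then show ?thesis
    using drift_kernel_of_gaussian_bounds[OF flow c2 dis _ measurable D(1) measure_pos_of_interior[OF D]] that
    by blast
qed

theorem lemma4p4:
  fixes b :: "'a::euclidean_space \<Rightarrow> 'a"
    and M :: "'p measure" and W :: "real \<Rightarrow> 'p \<Rightarrow> 'a"
    and X :: "'a \<Rightarrow> real \<Rightarrow> 'p \<Rightarrow> 'a"
    and \<theta> :: "real \<Rightarrow> 'a \<Rightarrow> 'a"
    and \<kappa> \<kappa>' :: "'a \<Rightarrow> 'a \<Rightarrow> real"
    and r :: "real \<Rightarrow> 'a \<Rightarrow> 'a \<Rightarrow> real"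
    and D :: "'a set" and \<delta>bar :: real
  assumes lip: "\<forall>x0. \<exists>K>0. \<exists>\<delta>0>0. \<forall>x. norm (x0 - x) < \<delta>0 \<longrightarrow> norm (b x0 - b x) \<le> K * norm (x0 - x)"
    and diss: "\<exists>c1 c2. c2 > 0 \<and> (\<forall>x. inner (b x) x \<le> c1 - c2 * (norm x)\<^sup>2)"
    and BM: "std_BM M W"
    and sde: "\<forall>x. solves_SDE M b W x (X x)"
    and flow: "is_flow b \<theta>"
    and dens: "\<forall>x. distributed M lborel (X x 1) (\<lambda>y. ennreal (\<kappa> x y))"
    and kcont: "continuous_on UNIV (\<lambda>z. \<kappa> (fst z) (snd z))"
    and kbounds: "\<exists>l0 l1 C0 C1. 0 < l0 \<and> l0 \<le> 1 \<and> 0 < l1 \<and> l1 \<le> 1 \<and> C0 \<ge> 1 \<and> C1 \<ge> 1 \<and>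
        (\<forall>x y. exp (- (norm (\<theta> 1 x - y))\<^sup>2 / l0) / C0 \<le> \<kappa> x y
             \<and> \<kappa> x y \<le> C0 * exp (- l0 * (norm (\<theta> 1 x - y))\<^sup>2)) \<and>
        (\<forall>x y. \<exists>g. ((\<lambda>x'. \<kappa> x' y) has_derivative (\<lambda>h. inner g h)) (at x)
             \<and> norm g \<le> C1 * exp (- l1 * (norm (\<theta> 1 x - y))\<^sup>2)) \<and>
        (\<forall>x y. \<exists>g. ((\<lambda>y'. \<kappa> x y') has_derivative (\<lambda>h. inner g h)) (at y)
             \<and> norm g \<le> C1 * exp (- l1 * (norm (\<theta> 1 x - y))\<^sup>2))"
    and D: "compact D" "0 \<in> interior D"
    and dbar: "\<delta>bar > 0"
    and kdot_meas: "(\<lambda>z. \<kappa>' (fst z) (snd z)) \<in> borel_measurable (lborel \<Otimes>\<^sub>M lborel)"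
    and kdot_supp: "\<forall>x y. (x, y) \<notin> D \<times> D \<longrightarrow> \<kappa>' x y = 0"
    and kdot_L2: "integrable (lborel \<Otimes>\<^sub>M lborel) (\<lambda>z. (\<kappa>' (fst z) (snd z))\<^sup>2)"
    and r_meas: "\<forall>\<delta>\<in>{0..<\<delta>bar}. (\<lambda>z. r \<delta> (fst z) (snd z)) \<in> borel_measurable (lborel \<Otimes>\<^sub>M lborel)"
    and r_supp: "\<forall>\<delta>\<in>{0..<\<delta>bar}. \<forall>x y. (x, y) \<notin> D \<times> D \<longrightarrow> r \<delta> x y = 0"
    and r_L2: "\<forall>\<delta>\<in>{0..<\<delta>bar}. integrable (lborel \<Otimes>\<^sub>M lborel) (\<lambda>z. (r \<delta> (fst z) (snd z))\<^sup>2)"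
    and r0: "\<forall>x y. r 0 x y = 0"
    and r_small: "((\<lambda>\<delta>. kernel_L2_norm (r \<delta>) / \<delta>) \<longlongrightarrow> 0) (at_right 0)"
    and int_pres: "\<forall>\<delta>\<in>{0..<\<delta>bar}. \<forall>g. integrable lborel g
        \<and> integrable lborel (transfer_op (\<lambda>x y. \<kappa> x y + \<delta> * \<kappa>' x y + r \<delta> x y) g)
        \<longrightarrow> (\<integral>y. transfer_op (\<lambda>x y. \<kappa> x y + \<delta> * \<kappa>' x y + r \<delta> x y) g y \<partial>lborel)
            = (\<integral>x. g x \<partial>lborel)"
  shows "\<exists>A B \<delta>1 lam. A > 0 \<and> B > 0 \<and> \<delta>1 > 0 \<and> \<delta>1 \<le> \<delta>bar \<and> 0 \<le> lam \<and> lam < 1 \<and>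
     (\<forall>\<delta>\<in>{0..<\<delta>1}. \<forall>n. \<forall>f. in_B D f \<longrightarrow>
        (let L = transfer_op (\<lambda>x y. \<kappa> x y + \<delta> * \<kappa>' x y + r \<delta> x y) in
          in_B D ((L ^^ n) f) \<and>
          s_norm D ((L ^^ n) f) \<le> A * lam ^ n * s_norm D f + B * L1_norm f))"
proof -
  obtain l0 C0 where "0 < l0" "l0 \<le> 1" "1 \<le> C0"
    and "\<And>x y. exp (- (norm (\<theta> 1 x - y))\<^sup>2 / l0) / C0 \<le> \<kappa> x y"
    and "\<And>x y. \<kappa> x y \<le> C0 * exp (- l0 * (norm (\<theta> 1 x - y))\<^sup>2)"
    using kbounds by blast
  moreover have "prob_space M" using BM by (simp add: std_BM_def)
  ultimately obtain \<gamma> Cd where "drift_kernel \<kappa> D C0 \<gamma> Cd"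
    using drift_kernel_of_density[of b M \<theta> X \<kappa> l0 C0 D] diss flow dens kcont D by blast
  then interpret drift_kernel \<kappa> D C0 \<gamma> Cd .
  obtain A B \<epsilon>0 lam where AB: "0 < A" "0 < B" "0 < \<epsilon>0" "0 \<le> lam" "lam < 1"
    and LY: "\<And>p. small_HS_kernel D \<epsilon>0 p \<Longrightarrow> integral_preserving (\<lambda>x y. \<kappa> x y + p x y) \<Longrightarrow>
      lasota_yorke D (\<lambda>x y. \<kappa> x y + p x y) A B lam"
    using uniform_lasota_yorke by blast
  obtain \<delta>1 where \<delta>1: "0 < \<delta>1" "\<delta>1 \<le> \<delta>bar"
    and small: "\<And>\<delta>. \<delta> \<in> {0..<\<delta>1} \<Longrightarrow> small_HS_kernel D \<epsilon>0 (\<lambda>x y. \<delta> * \<kappa>' x y + r \<delta> x y)"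
    using small_HS_kernel_eventually[OF dbar AB(3) kdot_meas kdot_supp kdot_L2 r_meas r_supp r_L2 r0 r_small]
    by blast
  have "lasota_yorke D (\<lambda>x y. \<kappa> x y + \<delta> * \<kappa>' x y + r \<delta> x y) A B lam" if "\<delta> \<in> {0..<\<delta>1}" for \<delta>
    using LY[OF small[OF that]] int_pres that \<delta>1
    by (auto simp: integral_preserving_def add.assoc)
  then show ?thesis
    using AB \<delta>1 unfolding lasota_yorke_def Let_def by blast
qed

end
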